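(* Let $\varphi\in C^2(\partial B^2)$ and let $u=\Psi_{B^2,\varphi}$ on $B^2$, extended by $u=\varphi$ on $\partial B^2$. Then $u\in Lip(\overline{B^2})$, i.e. $u$ is Lipschitz on $\overline{B^2}$.
   Context: $B^2$ is the unit ball of $\mathbb{O}^2\cong\mathbb{R}^{16}$, $\mathbb{O}$ the octonions (basis $e_0=1,\dots,e_7$, $e_p^2=-1$, $e_pe_q=-e_qe_p$ for $p\ne q\ge1$). $OPSH(\Omega)$: upper semicontinuous $[-\infty,\infty)$-valued functions subharmonic on every affine octonionic line (translate of $\{(\mathbf{x},\mathbf{b}\mathbf{x}):\mathbf{x}\in\mathbb{O}\}$, $\mathbf{b}\in\mathbb{O}$, or of $\{(0,\mathbf{x})\}$). Perron–Bremermann function: $\Psi_{B^2,\varphi}(\mathbf{x})=\sup\{w(\mathbf{x}):w\in OPSH(B^2),\ \limsup_{B^2\ni\mathbf{y}\to\mathbf{z}}w(\mathbf{y})\le\varphi(\mathbf{z})\ \forall\mathbf{z}\in\partial B^2\}$. *)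

theory Defs
  imports "HOL-Analysis.Analysis" "HOL-Library.Liminf_Limsup"
begin

section \<open>Octonions via the Cayley--Dickson construction\<close>

type_synonym quat = "complex \<times> complex"
type_synonym oct = "quat \<times> quat"

definition qmult :: "quat \<Rightarrow> quat \<Rightarrow> quat" where
  "qmult p q = (case p of (a, b) \<Rightarrow> case q of (c, d) \<Rightarrow>
      (a * c - cnj d * b, d * a + b * cnj c))"

definition qcnj :: "quat \<Rightarrow> quat" where
  "qcnj p = (case p of (a, b) \<Rightarrow> (cnj a, - b))"

definition omult :: "oct \<Rightarrow> oct \<Rightarrow> oct" where
  "omult p q = (case p of (a, b) \<Rightarrow> case q of (c, d) \<Rightarrow>
      (qmult a c - qmult (qcnj d) b, qmult d a + qmult b (qcnj c)))"

definition C2_on :: "'a::euclidean_space set \<Rightarrow> ('a \<Rightarrow> real) \<Rightarrow> bool" where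
  "C2_on U f \<longleftrightarrow> (\<exists>(D :: 'a \<Rightarrow> ('a \<Rightarrow>\<^sub>L real)) (D2 :: 'a \<Rightarrow> ('a \<Rightarrow>\<^sub>L ('a \<Rightarrow>\<^sub>L real))).
      (\<forall>x\<in>U. (f has_derivative blinfun_apply (D x)) (at x)) \<and>
      (\<forall>x\<in>U. (D has_derivative blinfun_apply (D2 x)) (at x)) \<and>
      continuous_on U D2)"

definition harmonic_on :: "'a::euclidean_space set \<Rightarrow> ('a \<Rightarrow> real) \<Rightarrow> bool" where
  "harmonic_on U f \<longleftrightarrow> (\<exists>(D :: 'a \<Rightarrow> ('a \<Rightarrow>\<^sub>L real)) (D2 :: 'a \<Rightarrow> ('a \<Rightarrow>\<^sub>L ('a \<Rightarrow>\<^sub>L real))).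
      (\<forall>x\<in>U. (f has_derivative blinfun_apply (D x)) (at x)) \<and>
      (\<forall>x\<in>U. (D has_derivative blinfun_apply (D2 x)) (at x)) \<and>
      continuous_on U D2 \<and>
      (\<forall>x\<in>U. (\<Sum>i\<in>Basis. blinfun_apply (blinfun_apply (D2 x) i) i) = 0))"

definition usc_on :: "'a::topological_space set \<Rightarrow> ('a \<Rightarrow> ereal) \<Rightarrow> bool" where
  "usc_on U u \<longleftrightarrow> (\<forall>x\<in>U. \<forall>c. u x < c \<longrightarrow> eventually (\<lambda>y. u y < c) (at x within U))"

definition subharmonic_on :: "'a::euclidean_space set \<Rightarrow> ('a \<Rightarrow> ereal) \<Rightarrow> bool" where
  "subharmonic_on U u \<longleftrightarrow>
     (\<forall>x\<in>U. u x < \<infinity>) \<and> usc_on U u \<and>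
     (\<forall>x r h. 0 < r \<longrightarrow> cball x r \<subseteq> U \<longrightarrow> continuous_on (cball x r) h \<longrightarrow>
        harmonic_on (ball x r) h \<longrightarrow> (\<forall>y\<in>sphere x r. u y \<le> ereal (h y)) \<longrightarrow>
        (\<forall>y\<in>cball x r. u y \<le> ereal (h y)))"

definition oline :: "oct \<times> oct \<Rightarrow> oct \<Rightarrow> oct \<Rightarrow> oct \<times> oct" where
  "oline p b x = p + (x, omult b x)"

definition vline :: "oct \<times> oct \<Rightarrow> oct \<Rightarrow> oct \<times> oct" where
  "vline p x = p + (0, x)"

definition OPSH :: "(oct \<times> oct) set \<Rightarrow> (oct \<times> oct \<Rightarrow> ereal) \<Rightarrow> bool" where
  "OPSH \<Omega> w \<longleftrightarrow> (\<forall>x\<in>\<Omega>. w x < \<infinity>) \<and> usc_on \<Omega> w \<and>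
     (\<forall>p b. subharmonic_on (oline p b -` \<Omega>) (w \<circ> oline p b)) \<and>
     (\<forall>p. subharmonic_on (vline p -` \<Omega>) (w \<circ> vline p))"

definition perron_bremermann :: "(oct \<times> oct) set \<Rightarrow> (oct \<times> oct \<Rightarrow> real) \<Rightarrow> oct \<times> oct \<Rightarrow> ereal" where
  "perron_bremermann \<Omega> \<phi> x = Sup {w x | w. OPSH \<Omega> w \<and>
      (\<forall>z\<in>frontier \<Omega>. Limsup (at z within \<Omega>) w \<le> ereal (\<phi> z))}"

definition C2_on_sphere :: "((oct \<times> oct) \<Rightarrow> real) \<Rightarrow> bool" where
  "C2_on_sphere \<phi> \<longleftrightarrow> (\<exists>U \<Phi>. open U \<and> sphere 0 1 \<subseteq> U \<and> C2_on U \<Phi> \<and>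
      (\<forall>z\<in>sphere 0 1. \<Phi> z = \<phi> z))"

end

theory Submission
  imports Defs
begin

lemma linear_omult_right: "linear (omult b)"
  by (rule linearI)
    (auto simp: omult_def qmult_def qcnj_def split: prod.splits simp: algebra_simps scaleR_conv_of_real)

definition octonionic_lines :: "(oct \<Rightarrow> oct \<times> oct) set" where
  "octonionic_lines = range (case_prod oline) \<union> range vline"

lemma OPSH_iff_lines:
  "OPSH \<Omega> w \<longleftrightarrow> (\<forall>x\<in>\<Omega>. w x < \<infinity>) \<and> usc_on \<Omega> w \<and>
    (\<forall>l\<in>octonionic_lines. subharmonic_on (l -` \<Omega>) (w \<circ> l))"
  unfolding OPSH_def octonionic_lines_def by auto

lemma octonionic_line_affine:
  assumes "l \<in> octonionic_lines"
  obtains c L where "linear L" "l = (\<lambda>x. c + L x)"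
proof -
  consider p b where "l = oline p b" | p where "l = vline p"
    using assms unfolding octonionic_lines_def by auto
  then show thesis
  proof cases
    case (1 p b)
    have "linear (\<lambda>x. (x, omult b x))"
      by (rule linearI) (simp_all add: linear_add[OF linear_omult_right] linear_scale[OF linear_omult_right])
    with 1 show thesis by (intro that[of "\<lambda>x. (x, omult b x)" p]) (auto simp: oline_def)
  next
    case (2 p)
    have "linear (\<lambda>x::oct. (0::oct, x))"
      by (rule linearI) simp_all
    with 2 show thesis by (intro that[of "\<lambda>x. (0, x)" p]) (auto simp: vline_def)
  qed
qed

lemma octonionic_line_translate:
  assumes "l \<in> octonionic_lines"
  shows "(\<lambda>x. l x + h) \<in> octonionic_lines"
proof -
  consider p b where "l = oline p b" | p where "l = vline p"
    using assms unfolding octonionic_lines_def by auto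
  then show ?thesis
  proof cases
    case (1 p b)
    then have "(\<lambda>x. l x + h) = case_prod oline (p + h, b)"
      by (auto simp: oline_def)
    then show ?thesis unfolding octonionic_lines_def by blast
  next
    case (2 p)
    then have "(\<lambda>x. l x + h) = vline (p + h)"
      by (auto simp: vline_def)
    then show ?thesis unfolding octonionic_lines_def by blast
  qed
qed

lemma continuous_on_octonionic_line:
  assumes "l \<in> octonionic_lines"
  shows "continuous_on S l"
proof -
  obtain c L where "linear L" "l = (\<lambda>x. c + L x)"
    using assms by (rule octonionic_line_affine)
  then show ?thesis
    by (simp add: continuous_on_add linear_continuous_on linear_conv_bounded_linear)
qed

definition affine_function :: "('a::real_vector \<Rightarrow> real) \<Rightarrow> bool" where
  "affine_function g \<longleftrightarrow> (\<exists>c l. linear l \<and> g = (\<lambda>x. c + l x))"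

lemma affine_function_const: "affine_function (\<lambda>x. c)"
  unfolding affine_function_def by (intro exI[of _ c] exI[of _ "\<lambda>x. 0"]) (simp add: linear_zero)

lemma affine_function_uminus:
  assumes "affine_function g"
  shows "affine_function (\<lambda>x. - g x)"
proof -
  obtain c l where "linear l" "g = (\<lambda>x. c + l x)"
    using assms unfolding affine_function_def by blast
  moreover from \<open>linear l\<close> have "linear (\<lambda>x. - l x)"
    by (simp add: linear_compose_neg)
  ultimately show ?thesis
    unfolding affine_function_def by (intro exI[of _ "- c"] exI[of _ "\<lambda>x. - l x"]) auto
qed

lemma affine_function_compose:
  assumes "affine_function g" "linear L"
  shows "affine_function (\<lambda>x. g (c + L x))"
proof -
  obtain a l where l: "linear l" "g = (\<lambda>x. a + l x)"
    using assms(1) unfolding affine_function_def by blast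
  have "g (c + L x) = (a + l c) + (l \<circ> L) x" for x
    using l by (simp add: linear_add)
  then show ?thesis
    unfolding affine_function_def using linear_compose[OF assms(2) l(1)] by blast
qed

lemma continuous_on_affine_function:
  fixes g :: "'a::euclidean_space \<Rightarrow> real"
  assumes "affine_function g"
  shows "continuous_on S g"
  using assms unfolding affine_function_def
  by (auto simp: continuous_on_add linear_continuous_on linear_conv_bounded_linear)

lemma harmonic_onE:
  assumes "harmonic_on U f"
  obtains D D2 where "\<And>x. x \<in> U \<Longrightarrow> (f has_derivative blinfun_apply (D x)) (at x)"
    "\<And>x. x \<in> U \<Longrightarrow> (D has_derivative blinfun_apply (D2 x)) (at x)"
    "continuous_on U D2"
    "\<And>x. x \<in> U \<Longrightarrow> (\<Sum>i\<in>Basis. D2 x i i) = 0"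
  using assms unfolding harmonic_on_def by blast

lemma harmonic_on_subset: "harmonic_on U f \<Longrightarrow> V \<subseteq> U \<Longrightarrow> harmonic_on V f"
  unfolding harmonic_on_def by (meson continuous_on_subset subsetD)

lemma harmonic_on_add:
  assumes "harmonic_on U f" "harmonic_on U g"
  shows "harmonic_on U (\<lambda>x. f x + g x)"
proof -
  obtain D D2 where f: "\<And>x. x \<in> U \<Longrightarrow> (f has_derivative blinfun_apply (D x)) (at x)"
      "\<And>x. x \<in> U \<Longrightarrow> (D has_derivative blinfun_apply (D2 x)) (at x)"
      "continuous_on U D2" "\<And>x. x \<in> U \<Longrightarrow> (\<Sum>i\<in>Basis. D2 x i i) = 0"
    using assms(1) by (elim harmonic_onE) (rule that)
  obtain E E2 where g: "\<And>x. x \<in> U \<Longrightarrow> (g has_derivative blinfun_apply (E x)) (at x)"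
      "\<And>x. x \<in> U \<Longrightarrow> (E has_derivative blinfun_apply (E2 x)) (at x)"
      "continuous_on U E2" "\<And>x. x \<in> U \<Longrightarrow> (\<Sum>i\<in>Basis. E2 x i i) = 0"
    using assms(2) by (elim harmonic_onE) (rule that)
  show ?thesis unfolding harmonic_on_def
  proof (intro exI[of _ "\<lambda>x. D x + E x"] exI[of _ "\<lambda>x. D2 x + E2 x"] conjI ballI)
    fix x assume "x \<in> U"
    show "((\<lambda>x. f x + g x) has_derivative blinfun_apply (D x + E x)) (at x)"
      using has_derivative_add[OF f(1) g(1), OF \<open>x \<in> U\<close> \<open>x \<in> U\<close>] by (simp add: plus_blinfun.rep_eq)
    show "((\<lambda>x. D x + E x) has_derivative blinfun_apply (D2 x + E2 x)) (at x)"
      using has_derivative_add[OF f(2) g(2), OF \<open>x \<in> U\<close> \<open>x \<in> U\<close>] by (simp add: plus_blinfun.rep_eq fun_eq_iff)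
    show "(\<Sum>i\<in>Basis. blinfun_apply (blinfun_apply (D2 x + E2 x) i) i) = 0"
      using f(4) g(4) \<open>x \<in> U\<close> by (simp add: plus_blinfun.rep_eq sum.distrib)
  qed (use f(3) g(3) in \<open>intro continuous_intros\<close>)
qed

lemma harmonic_on_cmult:
  assumes "harmonic_on U f"
  shows "harmonic_on U (\<lambda>x. c * f x)"
proof -
  obtain D D2 where f: "\<And>x. x \<in> U \<Longrightarrow> (f has_derivative blinfun_apply (D x)) (at x)"
      "\<And>x. x \<in> U \<Longrightarrow> (D has_derivative blinfun_apply (D2 x)) (at x)"
      "continuous_on U D2" "\<And>x. x \<in> U \<Longrightarrow> (\<Sum>i\<in>Basis. D2 x i i) = 0"
    using assms by (elim harmonic_onE) (rule that)
  show ?thesis unfolding harmonic_on_def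
  proof (intro exI[of _ "\<lambda>x. c *\<^sub>R D x"] exI[of _ "\<lambda>x. c *\<^sub>R D2 x"] conjI ballI)
    fix x assume "x \<in> U"
    show "((\<lambda>x. c * f x) has_derivative blinfun_apply (c *\<^sub>R D x)) (at x)"
      using has_derivative_scaleR_right[OF f(1), OF \<open>x \<in> U\<close>, of c] by (simp add: scaleR_blinfun.rep_eq)
    show "((\<lambda>x. c *\<^sub>R D x) has_derivative blinfun_apply (c *\<^sub>R D2 x)) (at x)"
      using has_derivative_scaleR_right[OF f(2), OF \<open>x \<in> U\<close>, of c] by (simp add: scaleR_blinfun.rep_eq fun_eq_iff)
    show "(\<Sum>i\<in>Basis. blinfun_apply (blinfun_apply (c *\<^sub>R D2 x) i) i) = 0"
      using f(4) \<open>x \<in> U\<close> by (simp add: scaleR_blinfun.rep_eq sum_distrib_left[symmetric])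
  qed (use f(3) in \<open>intro continuous_intros\<close>)
qed

lemma harmonic_on_diff:
  assumes "harmonic_on U f" "harmonic_on U g"
  shows "harmonic_on U (\<lambda>x. f x - g x)"
  using harmonic_on_add[OF assms(1) harmonic_on_cmult[OF assms(2), of "-1"]] by simp

lemma harmonic_on_affine_function:
  fixes g :: "'a::euclidean_space \<Rightarrow> real"
  assumes "affine_function g"
  shows "harmonic_on U g"
proof -
  obtain c l where l: "linear l" "g = (\<lambda>x. c + l x)"
    using assms unfolding affine_function_def by blast
  then have "bounded_linear l" by (simp add: linear_conv_bounded_linear)
  show ?thesis unfolding harmonic_on_def l(2)
  proof (intro exI[of _ "\<lambda>x. Blinfun l"] exI[of _ "\<lambda>x. 0"] conjI ballI)
    fix x
    show "((\<lambda>x. c + l x) has_derivative blinfun_apply (Blinfun l)) (at x)"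
      using \<open>bounded_linear l\<close>
      by (auto simp: bounded_linear_Blinfun_apply intro!: derivative_eq_intros bounded_linear_imp_has_derivative)
  qed (auto simp: zero_blinfun.rep_eq intro!: derivative_eq_intros)
qed

lemma harmonic_on_const: "harmonic_on U (\<lambda>x::'a::euclidean_space. c)"
  by (rule harmonic_on_affine_function[OF affine_function_const])

lemma harmonic_on_quadratic:
  fixes e a :: "'a::euclidean_space"
  assumes "norm e = 1"
  shows "harmonic_on U (\<lambda>w. real DIM('a) * (inner (w - a) e)\<^sup>2 - (norm (w - a))\<^sup>2)"
proof -
  define n where "n = real DIM('a)"
  define A where "A = blinfun_inner_left e"
  define Q where "Q u = (2 * n * inner u e) *\<^sub>R A - 2 *\<^sub>R blinfun_inner_left u" for u
  have "bounded_linear Q"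
    unfolding Q_def by (intro bounded_linear_intros)
  then have Q: "blinfun_apply (Blinfun Q) = Q"
    by (rule bounded_linear_Blinfun_apply)
  show ?thesis unfolding harmonic_on_def n_def[symmetric]
  proof (intro exI[of _ "\<lambda>w. Q (w - a)"] exI[of _ "\<lambda>w. Blinfun Q"] conjI ballI)
    fix x
    show "((\<lambda>w. n * (inner (w - a) e)\<^sup>2 - (norm (w - a))\<^sup>2) has_derivative blinfun_apply (Q (x - a))) (at x)"
      unfolding power2_norm_eq_inner
      by (auto intro!: derivative_eq_intros simp: Q_def A_def fun_eq_iff scaleR_blinfun.rep_eq plus_blinfun.rep_eq
          minus_blinfun.rep_eq inner_diff_left inner_diff_right algebra_simps inner_commute)
    show "((\<lambda>w. Q (w - a)) has_derivative blinfun_apply (Blinfun Q)) (at x)"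
      unfolding Q
      using bounded_linear.has_derivative[OF \<open>bounded_linear Q\<close>
          has_derivative_diff[OF has_derivative_ident has_derivative_const]]
      by simp
    have "(\<Sum>i\<in>Basis. Q i i) = (\<Sum>i\<in>Basis. 2 * n * (inner e i * inner e i) - 2)"
      by (intro sum.cong refl) (simp add: Q_def A_def minus_blinfun.rep_eq scaleR_blinfun.rep_eq inner_commute)
    also have "\<dots> = 2 * n * (norm e)\<^sup>2 - 2 * n"
      by (simp add: sum_subtractf sum_distrib_left[symmetric] n_def euclidean_inner[of e e, symmetric]
          power2_norm_eq_inner)
    finally show "(\<Sum>i\<in>Basis. blinfun_apply (blinfun_apply (Blinfun Q) i) i) = 0"
      using assms by (simp add: Q)
  qed simp
qed

lemma DERIV_local_min_second_nonneg:
  fixes \<phi> \<psi> :: "real \<Rightarrow> real"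
  assumes "0 < d"
    and \<phi>: "\<And>t. \<bar>t\<bar> < d \<Longrightarrow> (\<phi> has_real_derivative \<psi> t) (at t)"
    and \<psi>: "(\<psi> has_real_derivative c) (at 0)"
    and min: "\<And>t. \<bar>t\<bar> < d \<Longrightarrow> \<phi> 0 \<le> \<phi> t"
  shows "0 \<le> c"
proof (rule ccontr)
  assume "\<not> 0 \<le> c"
  have "\<psi> 0 = 0"
    using DERIV_local_min[OF \<phi> \<open>0 < d\<close>] \<open>0 < d\<close> min by auto
  moreover obtain d' where "0 < d'" and dec: "\<And>h. 0 < h \<Longrightarrow> h < d' \<Longrightarrow> \<psi> h < \<psi> 0"
    using DERIV_neg_dec_right[OF \<psi>] \<open>\<not> 0 \<le> c\<close> by force
  define h where "h = min d d' / 2"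
  have h: "0 < h" "h < d" "h < d'"
    using \<open>0 < d\<close> \<open>0 < d'\<close> by (auto simp: h_def)
  obtain z where "0 < z" "z < h" and mvt: "\<phi> h - \<phi> 0 = (h - 0) * \<psi> z"
    using MVT2[OF \<open>0 < h\<close>, of \<phi> \<psi>] \<phi> h by force
  ultimately have "h * \<psi> z < 0"
    using dec[of z] h by (simp add: mult_pos_neg)
  with mvt min[of h] h show False by simp
qed

lemma local_min_second_derivative_nonneg:
  fixes f :: "'a::real_normed_vector \<Rightarrow> real"
  assumes "0 < d"
    and Df: "\<And>y. y \<in> ball x d \<Longrightarrow> (f has_derivative blinfun_apply (Df y)) (at y)"
    and D2f: "(Df has_derivative D2f) (at x)"
    and min: "\<And>y. y \<in> ball x d \<Longrightarrow> f x \<le> f y"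
  shows "0 \<le> D2f v v"
proof -
  define e where "e = d / (norm v + 1)"
  have "0 < e" using \<open>0 < d\<close> by (simp add: e_def add_nonneg_pos)
  have in_ball: "x + t *\<^sub>R v \<in> ball x d" if "\<bar>t\<bar> < e" for t
  proof -
    have "\<bar>t\<bar> * norm v \<le> \<bar>t\<bar> * (norm v + 1)" by (simp add: mult_left_mono)
    also have "\<dots> < d"
      using that by (simp add: e_def pos_less_divide_eq add_nonneg_pos)
    finally show ?thesis by (simp add: dist_norm)
  qed
  have line: "((\<lambda>t. x + t *\<^sub>R v) has_derivative (\<lambda>s. s *\<^sub>R v)) (at t)" for t
    by (auto intro!: derivative_eq_intros)
  show ?thesis
  proof (rule DERIV_local_min_second_nonneg[OF \<open>0 < e\<close>])
    fix t :: real assume "\<bar>t\<bar> < e"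
    show "((\<lambda>t. f (x + t *\<^sub>R v)) has_real_derivative Df (x + t *\<^sub>R v) v) (at t)"
      using has_derivative_compose[OF line Df[OF in_ball[OF \<open>\<bar>t\<bar> < e\<close>]]]
      unfolding has_field_derivative_def
      by (rule has_derivative_eq_rhs) (simp add: fun_eq_iff blinfun.scaleR_right)
    show "f (x + 0 *\<^sub>R v) \<le> f (x + t *\<^sub>R v)"
      using min in_ball[OF \<open>\<bar>t\<bar> < e\<close>] by simp
  next
    have "linear D2f"
      using has_derivative_linear[OF D2f] .
    have "(Df has_derivative D2f) (at (x + 0 *\<^sub>R v))"
      using D2f by simp
    from has_derivative_compose[OF line this]
    have "((\<lambda>t. Df (x + t *\<^sub>R v)) has_derivative (\<lambda>s. D2f (s *\<^sub>R v))) (at 0)" .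
    from blinfun.FDERIV[OF this has_derivative_const[of v]]
    show "((\<lambda>t. Df (x + t *\<^sub>R v) v) has_real_derivative D2f v v) (at 0)"
      unfolding has_field_derivative_def
      by (rule has_derivative_eq_rhs)
        (simp add: fun_eq_iff linear_scale[OF \<open>linear D2f\<close>] scaleR_blinfun.rep_eq)
  qed
qed

lemma harmonic_on_cball_nonneg:
  fixes H :: "'a::euclidean_space \<Rightarrow> real"
  assumes "0 < r" and harm: "harmonic_on (ball c r) H" and cont: "continuous_on (cball c r) H"
    and sphere: "\<And>y. y \<in> sphere c r \<Longrightarrow> 0 \<le> H y" and "y \<in> cball c r"
  shows "0 \<le> H y"
proof (rule ccontr)
  assume "\<not> 0 \<le> H y"
  obtain D D2 where D: "\<And>x. x \<in> ball c r \<Longrightarrow> (H has_derivative blinfun_apply (D x)) (at x)"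
      and D2: "\<And>x. x \<in> ball c r \<Longrightarrow> (D has_derivative blinfun_apply (D2 x)) (at x)"
      and laplace: "\<And>x. x \<in> ball c r \<Longrightarrow> (\<Sum>i\<in>Basis. D2 x i i) = 0"
    using harm by (elim harmonic_onE) (rule that)
  define \<epsilon> where "\<epsilon> = - H y / (2 * r\<^sup>2)"
  have "0 < \<epsilon>" "H y = - 2 * (\<epsilon> * r\<^sup>2)"
    using \<open>\<not> 0 \<le> H y\<close> \<open>0 < r\<close> by (auto simp: \<epsilon>_def divide_neg_pos)
  define F where "F x = H x - \<epsilon> * inner (x - c) (x - c)" for x
  have "continuous_on (cball c r) F"
    unfolding F_def using cont by (intro continuous_intros)
  then obtain z where z: "z \<in> cball c r" and min: "\<And>x. x \<in> cball c r \<Longrightarrow> F z \<le> F x"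
    using continuous_attains_inf[of "cball c r" F] \<open>0 < r\<close> by auto
  have "0 \<le> \<epsilon> * inner (y - c) (y - c)"
    using \<open>0 < \<epsilon>\<close> by simp
  then have "F z \<le> H y"
    using min[OF \<open>y \<in> cball c r\<close>] unfolding F_def by linarith
  have "z \<notin> sphere c r"
  proof
    assume "z \<in> sphere c r"
    then have "- \<epsilon> * r\<^sup>2 \<le> F z"
      using sphere[of z] by (simp add: F_def dist_norm norm_minus_commute power2_norm_eq_inner[symmetric])
    moreover have "0 < \<epsilon> * r\<^sup>2"
      using \<open>0 < \<epsilon>\<close> \<open>0 < r\<close> by simp
    ultimately show False
      using \<open>F z \<le> H y\<close> \<open>H y = - 2 * (\<epsilon> * r\<^sup>2)\<close> by linarith
  qed
  with z have "z \<in> ball c r"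
    by auto
  then obtain d where "0 < d" "ball z d \<subseteq> ball c r"
    using open_contains_ball by blast
  have "0 \<le> D2 z i i - 2 * \<epsilon>" if "i \<in> Basis" for i
  proof -
    have "0 \<le> (D2 z i - (2 * \<epsilon>) *\<^sub>R blinfun_inner_left i) i"
    proof (rule local_min_second_derivative_nonneg[OF \<open>0 < d\<close>,
          where D2f = "\<lambda>v. D2 z v - (2 * \<epsilon>) *\<^sub>R blinfun_inner_left v"])
      fix x assume "x \<in> ball z d"
      then have "x \<in> ball c r"
        using \<open>ball z d \<subseteq> ball c r\<close> by blast
      have "(F has_derivative (\<lambda>v. D x v - \<epsilon> * (inner v (x - c) + inner (x - c) v))) (at x)"
        unfolding F_def using D[OF \<open>x \<in> ball c r\<close>]
        by (auto intro!: derivative_eq_intros simp: inner_commute)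
      then show "(F has_derivative blinfun_apply (D x - (2 * \<epsilon>) *\<^sub>R blinfun_inner_left (x - c))) (at x)"
        by (rule has_derivative_eq_rhs)
          (simp add: fun_eq_iff minus_blinfun.rep_eq scaleR_blinfun.rep_eq inner_commute)
      show "F z \<le> F x"
        using min \<open>x \<in> ball c r\<close> by simp
    next
      have "((\<lambda>x. D x - (2 * \<epsilon>) *\<^sub>R blinfun_inner_left (x - c)) has_derivative
          (\<lambda>v. D2 z v - (2 * \<epsilon>) *\<^sub>R blinfun_inner_left (v - 0))) (at z)"
        using D2[OF \<open>z \<in> ball c r\<close>]
        by (auto intro!: derivative_eq_intros bounded_linear.has_derivative[OF bounded_linear_blinfun_inner_left])
      then show "((\<lambda>x. D x - (2 * \<epsilon>) *\<^sub>R blinfun_inner_left (x - c)) has_derivative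
          (\<lambda>v. D2 z v - (2 * \<epsilon>) *\<^sub>R blinfun_inner_left v)) (at z)"
        by simp
    qed
    with that show ?thesis
      by (simp add: minus_blinfun.rep_eq scaleR_blinfun.rep_eq inner_Basis)
  qed
  then have "0 < (\<Sum>i\<in>Basis. D2 z i i)"
    using \<open>0 < \<epsilon>\<close> by (intro sum_pos) fastforce+
  with laplace[OF \<open>z \<in> ball c r\<close>] show False by simp
qed

lemma usc_on_continuous:
  assumes "continuous_on U f"
  shows "usc_on U (\<lambda>x. ereal (f x))"
  unfolding usc_on_def
proof (intro ballI allI impI)
  fix x c assume "x \<in> U" "ereal (f x) < c"
  have "((\<lambda>x. ereal (f x)) \<longlongrightarrow> ereal (f x)) (at x within U)"
    using assms \<open>x \<in> U\<close> by (intro tendsto_ereal) (simp add: continuous_on_def)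
  then show "\<forall>\<^sub>F y in at x within U. ereal (f y) < c"
    using \<open>ereal (f x) < c\<close> order_tendstoD(2) by blast
qed

lemma subharmonic_on_harmonic:
  fixes g :: "'a::euclidean_space \<Rightarrow> real"
  assumes harm: "harmonic_on U g" and cont: "continuous_on U g"
  shows "subharmonic_on U (\<lambda>x. ereal (g x))"
  unfolding subharmonic_on_def
proof (intro conjI allI impI ballI)
  show "usc_on U (\<lambda>x. ereal (g x))"
    using cont by (rule usc_on_continuous)
  fix x r h y
  assume "0 < r" "cball x r \<subseteq> U" "continuous_on (cball x r) h" "harmonic_on (ball x r) h"
    "\<forall>y\<in>sphere x r. ereal (g y) \<le> ereal (h y)" "y \<in> cball x r"
  have "ball x r \<subseteq> U"
    using \<open>cball x r \<subseteq> U\<close> ball_subset_cball by blast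
  with \<open>harmonic_on (ball x r) h\<close> have "harmonic_on (ball x r) (\<lambda>y. h y - g y)"
    by (intro harmonic_on_diff harmonic_on_subset[OF harm])
  moreover have "continuous_on (cball x r) (\<lambda>y. h y - g y)"
    using \<open>continuous_on (cball x r) h\<close> continuous_on_subset[OF cont \<open>cball x r \<subseteq> U\<close>]
    by (rule continuous_on_diff)
  ultimately have "0 \<le> h y - g y"
    by (rule harmonic_on_cball_nonneg[OF \<open>0 < r\<close>, where H = "\<lambda>y. h y - g y"])
      (use \<open>\<forall>y\<in>sphere x r. ereal (g y) \<le> ereal (h y)\<close> \<open>y \<in> cball x r\<close> in auto)
  then show "ereal (g y) \<le> ereal (h y)" by simp
qed simp

lemma usc_on_subset: "usc_on U g \<Longrightarrow> K \<subseteq> U \<Longrightarrow> usc_on K g"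
  unfolding usc_on_def by (meson filter_leD at_le subsetD)

lemma usc_on_diff_continuous:
  assumes "usc_on U f" "continuous_on U H"
  shows "usc_on U (\<lambda>x. f x - ereal (H x))"
  unfolding usc_on_def
proof (intro ballI allI impI)
  fix x c assume "x \<in> U" "f x - ereal (H x) < c"
  then obtain a where a: "f x - ereal (H x) < ereal a" "ereal a \<le> c"
    using ereal_dense2 less_imp_le by blast
  then obtain b where b: "f x < ereal b" "b < a + H x"
    using ereal_dense2[of "f x" "ereal (a + H x)"] by (auto simp: ereal_minus_less add.commute)
  have "\<forall>\<^sub>F y in at x within U. f y < ereal b"
    using assms(1) \<open>x \<in> U\<close> b(1) unfolding usc_on_def by blast
  moreover have "\<forall>\<^sub>F y in at x within U. b - a < H y"
    using assms(2) \<open>x \<in> U\<close> b(2) unfolding continuous_on_def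
    by (intro order_tendstoD(1)) (auto simp: algebra_simps)
  ultimately show "\<forall>\<^sub>F y in at x within U. f y - ereal (H y) < c"
  proof eventually_elim
    case (elim y)
    then have "f y < ereal (a + H y)"
      using less_trans[of "f y" "ereal b" "ereal (a + H y)"] by simp
    then have "f y - ereal (H y) < ereal a"
      by (simp add: ereal_minus_less)
    with a(2) show ?case by simp
  qed
qed

lemma usc_on_attains_max:
  fixes g :: "'a::topological_space \<Rightarrow> ereal"
  assumes usc: "usc_on K g" and "compact K" "K \<noteq> {}"
  obtains y where "y \<in> K" "\<And>z. z \<in> K \<Longrightarrow> g z \<le> g y"
proof -
  define m where "m = (SUP y\<in>K. g y)"
  define U where "U c = \<Union>{T. open T \<and> (\<forall>z\<in>T \<inter> K. g z < c)}" for c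
  have "\<exists>y\<in>K. g y = m"
  proof (rule ccontr)
    assume not_attained: "\<not> (\<exists>y\<in>K. g y = m)"
    have "K \<subseteq> (\<Union>c\<in>{c. c < m}. U c)"
    proof
      fix y assume "y \<in> K"
      then have "g y < m"
        using not_attained SUP_upper[of y K g] unfolding m_def by (simp add: order_less_le)
      then obtain c where c: "g y < c" "c < m"
        using dense by blast
      have "\<forall>\<^sub>F z in at y within K. g z < c"
        using usc \<open>y \<in> K\<close> c(1) unfolding usc_on_def by blast
      then obtain T where "open T" "y \<in> T" and T: "\<forall>z\<in>T. z \<in> K \<longrightarrow> z \<noteq> y \<longrightarrow> g z < c"
        unfolding eventually_at_topological by blast
      have "\<forall>z\<in>T \<inter> K. g z < c"
        using T c(1) by auto
      with \<open>open T\<close> \<open>y \<in> T\<close> have "y \<in> U c"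
        unfolding U_def by blast
      with c show "y \<in> (\<Union>c\<in>{c. c < m}. U c)" by blast
    qed
    moreover have "open (U c)" for c
      unfolding U_def by blast
    ultimately obtain C where C: "C \<subseteq> {c. c < m}" "finite C" "K \<subseteq> (\<Union>c\<in>C. U c)"
      using compactE_image[OF \<open>compact K\<close>] by metis
    then have "C \<noteq> {}" using \<open>K \<noteq> {}\<close> by auto
    have "g z \<le> Max C" if "z \<in> K" for z
    proof -
      obtain c where "c \<in> C" "z \<in> U c" using C \<open>z \<in> K\<close> by blast
      then have "g z < c" using \<open>z \<in> K\<close> unfolding U_def by blast
      also have "c \<le> Max C" using C \<open>c \<in> C\<close> by simp
      finally show ?thesis by simp
    qed
    then have "m \<le> Max C"
      unfolding m_def by (rule SUP_least)
    moreover have "Max C < m"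
      using C \<open>C \<noteq> {}\<close> Max_in by blast
    ultimately show False by simp
  qed
  then show thesis
    using that SUP_upper unfolding m_def by metis
qed

lemma usc_on_compact_gap:
  assumes "usc_on K g" "compact K" "\<And>z. z \<in> K \<Longrightarrow> g z < ereal M"
  obtains \<eta> where "0 < \<eta>" "\<And>z. z \<in> K \<Longrightarrow> g z \<le> ereal (M - \<eta>)"
proof (cases "K = {}")
  case False
  then obtain y where "y \<in> K" and max: "\<And>z. z \<in> K \<Longrightarrow> g z \<le> g y"
    using usc_on_attains_max[OF assms(1,2)] by blast
  then obtain c where "g y < ereal c" "c < M"
    using ereal_dense2[OF assms(3)[OF \<open>y \<in> K\<close>]] by auto
  then show thesis
    using max by (intro that[of "M - c"]) (auto intro: order_trans less_imp_le)
qed (rule that[of 1]; simp)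

lemma usc_on_closed_superlevel:
  fixes g :: "'a::topological_space \<Rightarrow> ereal"
  assumes "\<And>z. z \<in> closure D \<Longrightarrow> z \<notin> {y\<in>D. t \<le> g y} \<Longrightarrow> \<forall>\<^sub>F y in at z within D. g y < t"
  shows "closed {y\<in>D. t \<le> g y}"
  unfolding closed_limpt
proof (intro allI impI)
  fix z assume lim: "z islimpt {y\<in>D. t \<le> g y}"
  then have "z islimpt D"
    by (rule islimpt_subset) auto
  then have "z \<in> closure D"
    by (simp add: closure_def)
  show "z \<in> {y\<in>D. t \<le> g y}"
  proof (rule ccontr)
    assume "z \<notin> {y\<in>D. t \<le> g y}"
    with assms \<open>z \<in> closure D\<close> have "\<forall>\<^sub>F y in at z within D. g y < t" by blast
    then have "\<forall>\<^sub>F y in at z. y \<notin> {y\<in>D. t \<le> g y}"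
      unfolding eventually_at_filter by (rule eventually_mono) auto
    with lim show False
      by (simp add: islimpt_iff_eventually)
  qed
qed

definition cap_barrier :: "'a::euclidean_space \<Rightarrow> real \<Rightarrow> 'a \<Rightarrow> 'a \<Rightarrow> real" where
  "cap_barrier y \<rho> e w = 1/2 + (DIM('a) - 1/2) / \<rho> * inner (w - y) e +
     (DIM('a) * (inner (w - y) e)\<^sup>2 - (norm (w - y))\<^sup>2) / \<rho>\<^sup>2"

lemma harmonic_on_cap_barrier:
  assumes "norm e = 1"
  shows "harmonic_on U (cap_barrier y \<rho> e)"
proof -
  define k where "k = (DIM('a) - 1/2) / \<rho>"
  have "linear (\<lambda>w. k * inner w e)"
    by (rule linearI) (simp_all add: algebra_simps)
  then have "affine_function (\<lambda>w. 1/2 + k * inner (w - y) e)"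
    unfolding affine_function_def
    by (intro exI[of _ "1/2 - k * inner y e"] exI[of _ "\<lambda>w. k * inner w e"])
      (auto simp: algebra_simps)
  then have "harmonic_on U (\<lambda>w. (1/2 + k * inner (w - y) e) +
      1 / \<rho>\<^sup>2 * (DIM('a) * (inner (w - y) e)\<^sup>2 - (norm (w - y))\<^sup>2))"
    by (intro harmonic_on_add harmonic_on_affine_function harmonic_on_cmult harmonic_on_quadratic assms)
  then show ?thesis
    unfolding cap_barrier_def k_def by simp
qed

lemma cap_barrier_centre: "cap_barrier y \<rho> e y = 1/2"
  by (simp add: cap_barrier_def)

lemma cap_barrier_on_sphere:
  fixes e y :: "'a::euclidean_space"
  assumes "norm e = 1" "0 < \<rho>" "w \<in> sphere y \<rho>"
  shows "cap_barrier y \<rho> e w \<le> 2 * real DIM('a)"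
    and "inner (w - y) e < \<rho> / (2 * real DIM('a)) \<Longrightarrow> cap_barrier y \<rho> e w \<le> 0"
proof -
  define n where "n = real DIM('a)"
  define s where "s = inner (w - y) e / \<rho>"
  have "n \<ge> 1" unfolding n_def using DIM_positive[where 'a='a] by linarith
  have "norm (w - y) = \<rho>"
    using assms(3) by (simp add: dist_norm norm_minus_commute)
  then have "\<bar>inner (w - y) e\<bar> \<le> \<rho>"
    using Cauchy_Schwarz_ineq2[of "w - y" e] assms(1) by simp
  then have s: "-1 \<le> s" "s \<le> 1"
    using assms(2) by (auto simp: s_def abs_le_iff field_simps)
  have factor: "cap_barrier y \<rho> e w = n * ((s + 1) * (s - 1 / (2 * n)))"
    using \<open>norm (w - y) = \<rho>\<close> assms(2) \<open>n \<ge> 1\<close>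
    by (simp add: cap_barrier_def n_def[symmetric] s_def field_simps power2_eq_square)
  have "0 < 1 / (2 * n)"
    using \<open>n \<ge> 1\<close> by simp
  have "(s + 1) * (s - 1 / (2 * n)) \<le> 2"
  proof (cases "s \<le> 1 / (2 * n)")
    case True
    with s have "(s + 1) * (s - 1 / (2 * n)) \<le> 0"
      by (intro mult_nonneg_nonpos) auto
    then show ?thesis by linarith
  next
    case False
    with s \<open>0 < 1 / (2 * n)\<close> have "(s + 1) * (s - 1 / (2 * n)) \<le> 2 * 1"
      by (intro mult_mono) linarith+
    then show ?thesis by simp
  qed
  with \<open>n \<ge> 1\<close> have "cap_barrier y \<rho> e w \<le> n * 2"
    unfolding factor by (intro mult_left_mono) auto
  then show "cap_barrier y \<rho> e w \<le> 2 * real DIM('a)"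
    by (simp add: n_def)
  assume "inner (w - y) e < \<rho> / (2 * real DIM('a))"
  then have "s \<le> 1 / (2 * n)"
    using assms(2) by (simp add: s_def n_def divide_simps)
  with s \<open>n \<ge> 1\<close> show "cap_barrier y \<rho> e w \<le> 0"
    unfolding factor by (intro mult_nonneg_nonpos) auto
qed

lemma subharmonic_onD:
  assumes "subharmonic_on U u" "0 < r" "cball x r \<subseteq> U" "continuous_on (cball x r) h"
    "harmonic_on (ball x r) h" "\<And>y. y \<in> sphere x r \<Longrightarrow> u y \<le> ereal (h y)" "y \<in> cball x r"
  shows "u y \<le> ereal (h y)"
  using assms unfolding subharmonic_on_def by blast

lemma subharmonic_below_cap_bound:
  fixes f :: "'a::euclidean_space \<Rightarrow> ereal"
  assumes sub: "subharmonic_on V f" and "0 < \<rho>" "cball y \<rho> \<subseteq> V" "norm e = 1"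
    and harm: "harmonic_on (ball y \<rho>) H" and cont: "continuous_on (cball y \<rho>) H"
    and sphere: "\<And>w. w \<in> sphere y \<rho> \<Longrightarrow> f w \<le> ereal (H w + M)"
    and cap: "\<And>w. w \<in> sphere y \<rho> \<Longrightarrow> \<rho> / (2 * real DIM('a)) \<le> inner (w - y) e \<Longrightarrow>
      f w \<le> ereal (H w + M - \<eta>)"
    and "0 < \<eta>"
  shows "f y < ereal (H y + M)"
proof -
  define \<kappa> where "\<kappa> = \<eta> / (2 * real DIM('a))"
  have "0 < \<kappa>" using \<open>0 < \<eta>\<close> by (simp add: \<kappa>_def)
  define B where "B w = H w + M - \<kappa> * cap_barrier y \<rho> e w" for w
  have "continuous_on (cball y \<rho>) B"
    unfolding B_def cap_barrier_def using cont \<open>0 < \<rho>\<close> by (intro continuous_intros) auto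
  moreover have "harmonic_on (ball y \<rho>) B"
    unfolding B_def
    by (intro harmonic_on_diff harmonic_on_add harm harmonic_on_const harmonic_on_cmult
        harmonic_on_cap_barrier \<open>norm e = 1\<close>)
  moreover have "f w \<le> ereal (B w)" if "w \<in> sphere y \<rho>" for w
  proof (cases "\<rho> / (2 * real DIM('a)) \<le> inner (w - y) e")
    case True
    have "\<kappa> * cap_barrier y \<rho> e w \<le> \<kappa> * (2 * real DIM('a))"
      using cap_barrier_on_sphere(1)[OF \<open>norm e = 1\<close> \<open>0 < \<rho>\<close> that] \<open>0 < \<kappa>\<close>
      by (intro mult_left_mono) auto
    then have "ereal (H w + M - \<eta>) \<le> ereal (B w)"
      by (simp add: B_def \<kappa>_def)
    with cap[OF that True] show ?thesis
      by (rule order_trans)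
  next
    case False
    then have "cap_barrier y \<rho> e w \<le> 0"
      by (intro cap_barrier_on_sphere(2)[OF \<open>norm e = 1\<close> \<open>0 < \<rho>\<close> that]) simp
    with \<open>0 < \<kappa>\<close> have "ereal (H w + M) \<le> ereal (B w)"
      by (simp add: B_def mult_nonneg_nonpos)
    with sphere[OF that] show ?thesis
      by (rule order_trans)
  qed
  ultimately have "f y \<le> ereal (B y)"
    by (rule subharmonic_onD[OF sub \<open>0 < \<rho>\<close> \<open>cball y \<rho> \<subseteq> V\<close>]) (use \<open>0 < \<rho>\<close> in auto)
  also have "B y < H y + M"
    using \<open>0 < \<kappa>\<close> by (simp add: B_def cap_barrier_centre)
  finally show ?thesis by simp
qed

lemma usc_on_attains_max_superlevel:
  fixes g :: "'a::topological_space \<Rightarrow> ereal"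
  assumes usc: "usc_on D g" and compact: "\<And>t. 0 < t \<Longrightarrow> compact {z\<in>D. ereal t \<le> g z}"
    and "y \<in> D" "0 < g y"
  obtains z where "z \<in> D" "\<And>w. w \<in> D \<Longrightarrow> g w \<le> g z"
proof -
  obtain t where "0 < ereal t" "ereal t < g y"
    using ereal_dense2[OF \<open>0 < g y\<close>] by blast
  define K where "K = {z\<in>D. ereal t \<le> g z}"
  have "y \<in> K"
    using \<open>y \<in> D\<close> \<open>ereal t < g y\<close> by (simp add: K_def)
  moreover have "compact K"
    unfolding K_def using compact \<open>0 < ereal t\<close> by simp
  moreover have "usc_on K g"
    using usc by (rule usc_on_subset) (auto simp: K_def)
  ultimately obtain z where "z \<in> K" and max: "\<And>w. w \<in> K \<Longrightarrow> g w \<le> g z"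
    using usc_on_attains_max by blast
  have "g w \<le> g z" if "w \<in> D" for w
  proof (cases "w \<in> K")
    case False
    with \<open>w \<in> D\<close> have "g w < ereal t" by (simp add: K_def)
    also have "\<dots> < g y" by fact
    also have "\<dots> \<le> g z" using max \<open>y \<in> K\<close> .
    finally show ?thesis by simp
  qed (rule max)
  with \<open>z \<in> K\<close> show thesis
    using that K_def by blast
qed

lemma usc_on_excess_superlevel_compact:
  fixes f :: "'a::heine_borel \<Rightarrow> ereal"
  assumes usc: "usc_on D f" and "bounded D" and cont: "continuous_on (closure D) H"
    and boundary: "\<And>z. z \<in> frontier D \<Longrightarrow> Limsup (at z within D) f \<le> ereal (H z)"
    and "0 < t"
  shows "compact {y\<in>D. ereal t \<le> f y - ereal (H y)}"
  unfolding compact_eq_bounded_closed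
proof
  show "bounded {y\<in>D. ereal t \<le> f y - ereal (H y)}"
    using \<open>bounded D\<close> by (rule bounded_subset) auto
  show "closed {y\<in>D. ereal t \<le> f y - ereal (H y)}"
  proof (rule usc_on_closed_superlevel)
    fix z assume "z \<in> closure D" "z \<notin> {y\<in>D. ereal t \<le> f y - ereal (H y)}"
    show "\<forall>\<^sub>F y in at z within D. f y - ereal (H y) < ereal t"
    proof (cases "z \<in> D")
      case True
      have "usc_on D (\<lambda>y. f y - ereal (H y))"
        using usc continuous_on_subset[OF cont closure_subset] by (rule usc_on_diff_continuous)
      with True \<open>z \<notin> _\<close> show ?thesis
        unfolding usc_on_def by auto
    next
      case False
      with \<open>z \<in> closure D\<close> have "z \<in> frontier D"
        using interior_subset unfolding frontier_def by blast
      then have "Limsup (at z within D) f < ereal (H z + t / 2)"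
        using boundary[of z] \<open>0 < t\<close> by (simp add: le_less_trans)
      then have "\<forall>\<^sub>F y in at z within D. f y < ereal (H z + t / 2)"
        by (rule Limsup_lessD)
      moreover have "(H \<longlongrightarrow> H z) (at z within D)"
        using cont \<open>z \<in> closure D\<close> closure_subset unfolding continuous_on_def
        by (blast intro: tendsto_within_subset)
      then have "\<forall>\<^sub>F y in at z within D. H z - t / 2 < H y"
        using \<open>0 < t\<close> by (intro order_tendstoD(1)) auto
      ultimately show ?thesis
      proof eventually_elim
        case (elim y)
        then have "f y < ereal (H y + t)"
          using less_trans[of "f y" "ereal (H z + t / 2)" "ereal (H y + t)"] by simp
        then show ?case
          by (simp add: ereal_minus_less add.commute)
      qed
    qed
  qed
qed

lemma subharmonic_on_usc_on: "subharmonic_on U u \<Longrightarrow> usc_on U u"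
  by (simp add: subharmonic_on_def)

lemma subharmonic_excess_max_not_attained:
  fixes f :: "'a::euclidean_space \<Rightarrow> ereal"
  assumes sub: "subharmonic_on V f" and "open D" "D \<subseteq> V"
    and cont: "continuous_on D H" and harm: "harmonic_on D H"
    and le: "\<And>z. z \<in> D \<Longrightarrow> f z \<le> ereal (H z + M)"
    and "compact {z\<in>D. ereal (H z + M) \<le> f z}"
  shows "{z\<in>D. ereal (H z + M) \<le> f z} = {}"
proof (rule ccontr)
  define A where "A = {z\<in>D. ereal (H z + M) \<le> f z}"
  assume "{z\<in>D. ereal (H z + M) \<le> f z} \<noteq> {}"
  obtain e :: 'a where "e \<in> Basis"
    using nonempty_Basis by blast
  then have "norm e = 1" by simp
  have "compact A" "A \<noteq> {}"
    using assms(7) \<open>_ \<noteq> {}\<close> by (simp_all add: A_def)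
  then have "\<exists>y\<in>A. \<forall>z\<in>A. inner z e \<le> inner y e"
    by (intro continuous_attains_sup continuous_intros)
  then obtain y where "y \<in> A" and extreme: "\<And>z. z \<in> A \<Longrightarrow> inner z e \<le> inner y e"
    by blast
  then have "y \<in> D" by (simp add: A_def)
  then obtain \<rho> where "0 < \<rho>" "cball y \<rho> \<subseteq> D"
    using \<open>open D\<close> open_contains_cball by blast
  define C where "C = {w \<in> sphere y \<rho>. \<rho> / (2 * real DIM('a)) \<le> inner (w - y) e}"
  have "C \<subseteq> D"
    using \<open>cball y \<rho> \<subseteq> D\<close> by (auto simp: C_def)
  have "compact C"
  proof -
    have "closed {w. \<rho> / (2 * real DIM('a)) \<le> inner (w - y) e}"
      by (intro closed_Collect_le continuous_intros)
    moreover have "C = sphere y \<rho> \<inter> {w. \<rho> / (2 * real DIM('a)) \<le> inner (w - y) e}"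
      by (auto simp: C_def)
    ultimately show ?thesis
      using compact_Int_closed[OF compact_sphere] by simp
  qed
  have "f w - ereal (H w) < ereal M" if "w \<in> C" for w
  proof -
    have "0 < inner (w - y) e"
      using that \<open>0 < \<rho>\<close> by (auto simp: C_def intro: less_le_trans[rotated])
    then have "w \<notin> A"
      using extreme[of w] by (auto simp: inner_diff_left)
    with \<open>C \<subseteq> D\<close> that show ?thesis
      by (auto simp: A_def ereal_minus_less add.commute)
  qed
  moreover have "usc_on C (\<lambda>w. f w - ereal (H w))"
    using usc_on_subset[OF subharmonic_on_usc_on[OF sub]] \<open>C \<subseteq> D\<close> \<open>D \<subseteq> V\<close>
      continuous_on_subset[OF cont \<open>C \<subseteq> D\<close>]
    by (metis usc_on_diff_continuous order_trans)
  ultimately obtain \<eta> where "0 < \<eta>" and gap: "\<And>w. w \<in> C \<Longrightarrow> f w - ereal (H w) \<le> ereal (M - \<eta>)"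
    using usc_on_compact_gap \<open>compact C\<close> by blast
  have "f y < ereal (H y + M)"
  proof (rule subharmonic_below_cap_bound[OF sub \<open>0 < \<rho>\<close> _ \<open>norm e = 1\<close> _ _ _ _ \<open>0 < \<eta>\<close>])
    show "cball y \<rho> \<subseteq> V" using \<open>cball y \<rho> \<subseteq> D\<close> \<open>D \<subseteq> V\<close> by blast
    show "harmonic_on (ball y \<rho>) H"
      using \<open>cball y \<rho> \<subseteq> D\<close> ball_subset_cball by (intro harmonic_on_subset[OF harm]) blast
    show "continuous_on (cball y \<rho>) H"
      using cont \<open>cball y \<rho> \<subseteq> D\<close> by (rule continuous_on_subset)
    show "f w \<le> ereal (H w + M)" if "w \<in> sphere y \<rho>" for w
      using le that \<open>cball y \<rho> \<subseteq> D\<close> by auto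
    show "f w \<le> ereal (H w + M - \<eta>)"
      if "w \<in> sphere y \<rho>" "\<rho> / (2 * real DIM('a)) \<le> inner (w - y) e" for w
      using gap[of w] that by (simp add: C_def ereal_minus_le algebra_simps)
  qed
  with \<open>y \<in> A\<close> show False
    by (simp add: A_def not_le[symmetric])
qed

lemma subharmonic_maximum_principle:
  fixes f :: "'a::euclidean_space \<Rightarrow> ereal"
  assumes sub: "subharmonic_on V f" and "open D" "bounded D" "D \<subseteq> V"
    and cont: "continuous_on (closure D) H" and harm: "harmonic_on D H"
    and boundary: "\<And>z. z \<in> frontier D \<Longrightarrow> Limsup (at z within D) f \<le> ereal (H z)"
    and "y \<in> D"
  shows "f y \<le> ereal (H y)"
proof (rule ccontr)
  assume "\<not> f y \<le> ereal (H y)"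
  define g where "g z = f z - ereal (H z)" for z
  have "usc_on D f"
    using subharmonic_on_usc_on[OF sub] \<open>D \<subseteq> V\<close> by (rule usc_on_subset)
  have "continuous_on D H"
    using cont closure_subset by (rule continuous_on_subset)
  have "0 < g y"
    using \<open>\<not> f y \<le> ereal (H y)\<close> by (simp add: g_def ereal_less_minus_iff)
  moreover have "usc_on D g"
    unfolding g_def using \<open>usc_on D f\<close> \<open>continuous_on D H\<close> by (rule usc_on_diff_continuous)
  moreover have "compact {w\<in>D. ereal t \<le> g w}" if "0 < t" for t
    unfolding g_def using \<open>usc_on D f\<close> \<open>bounded D\<close> cont boundary that
    by (rule usc_on_excess_superlevel_compact)
  ultimately obtain z where "z \<in> D" and max: "\<And>w. w \<in> D \<Longrightarrow> g w \<le> g z"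
    using usc_on_attains_max_superlevel[of D g] \<open>y \<in> D\<close> by metis
  have "f z < \<infinity>"
    using sub \<open>z \<in> D\<close> \<open>D \<subseteq> V\<close> by (auto simp: subharmonic_on_def)
  moreover have "0 < g z"
    using max[OF \<open>y \<in> D\<close>] \<open>0 < g y\<close> by simp
  ultimately obtain M where "g z = ereal M" "0 < M"
    unfolding g_def by (cases "f z") auto
  have "{w\<in>D. ereal (H w + M) \<le> f w} = {}"
  proof (rule subharmonic_excess_max_not_attained[OF sub \<open>open D\<close> \<open>D \<subseteq> V\<close> \<open>continuous_on D H\<close> harm])
    show "f w \<le> ereal (H w + M)" if "w \<in> D" for w
      using max[OF that] \<open>g z = ereal M\<close> by (simp add: g_def ereal_minus_le add.commute)
    have "compact {w\<in>D. ereal M \<le> f w - ereal (H w)}"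
      using usc_on_excess_superlevel_compact[OF \<open>usc_on D f\<close> \<open>bounded D\<close> cont boundary \<open>0 < M\<close>] .
    then show "compact {w\<in>D. ereal (H w + M) \<le> f w}"
      by (simp add: ereal_le_minus add.commute)
  qed
  moreover have "ereal (H z + M) \<le> f z"
    using \<open>g z = ereal M\<close> unfolding g_def by (cases "f z") auto
  ultimately show False
    using \<open>z \<in> D\<close> by blast
qed

lemma second_order_remainder_bound:
  fixes f :: "'a::real_normed_vector \<Rightarrow> real"
  assumes Df: "\<And>x. x \<in> closed_segment a b \<Longrightarrow> (f has_derivative blinfun_apply (Df x)) (at x)"
    and D2f: "\<And>x. x \<in> closed_segment a b \<Longrightarrow> (Df has_derivative blinfun_apply (D2f x)) (at x)"
    and bound: "\<And>x. x \<in> closed_segment a b \<Longrightarrow> norm (D2f x) \<le> B"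
  shows "\<bar>f b - f a - Df a (b - a)\<bar> \<le> B * (norm (b - a))\<^sup>2"
proof -
  have Df_variation: "norm (Df x - Df a) \<le> B * norm (b - a)" if "x \<in> closed_segment a b" for x
  proof -
    have "norm (Df x - Df a) \<le> B * norm (x - a)"
      using D2f bound that
      by (intro differentiable_bound[OF convex_closed_segment])
        (auto intro: has_derivative_at_withinI simp: norm_blinfun.rep_eq[symmetric])
    also have "\<dots> \<le> B * norm (b - a)"
      using segment_bound1[OF that] order_trans[OF norm_ge_zero bound[OF ends_in_segment(1)]]
      by (rule mult_left_mono)
    finally show ?thesis .
  qed
  have "norm (f b - f a - Df a (b - a)) \<le> norm (b - a) * (B * norm (b - a))"
  proof (rule differentiable_bound_linearization[of a b "closed_segment a b" f "\<lambda>x. blinfun_apply (Df x)"])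
    show "a + t *\<^sub>R (b - a) \<in> closed_segment a b" if "t \<in> {0..1}" for t
      using that by (auto simp: closed_segment_def algebra_simps intro!: exI[of _ t])
    show "(f has_derivative blinfun_apply (Df x)) (at x within closed_segment a b)"
      if "x \<in> closed_segment a b" for x
      using Df[OF that] by (rule has_derivative_at_withinI)
    show "onorm (blinfun_apply (Df x) - blinfun_apply (Df a)) \<le> B * norm (b - a)"
      if "x \<in> closed_segment a b" for x
      using Df_variation[OF that] by (simp add: norm_blinfun.rep_eq minus_blinfun.rep_eq fun_diff_def)
  qed simp
  then show ?thesis
    by (simp add: power2_eq_square mult_ac)
qed

lemma C2_on_uniform_Taylor_bound:
  fixes \<Phi> :: "'a::euclidean_space \<Rightarrow> real"
  assumes "C2_on U \<Phi>" "open U" "compact S" "S \<subseteq> U"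
  obtains D :: "'a \<Rightarrow> 'a \<Rightarrow>\<^sub>L real" and M K where
    "\<And>\<zeta>. \<zeta> \<in> S \<Longrightarrow> norm (D \<zeta>) \<le> M"
    "\<And>\<zeta> q. \<zeta> \<in> S \<Longrightarrow> q \<in> S \<Longrightarrow> \<bar>\<Phi> q - \<Phi> \<zeta> - D \<zeta> (q - \<zeta>)\<bar> \<le> K * (norm (q - \<zeta>))\<^sup>2"
proof -
  obtain D D2 where D: "\<forall>x\<in>U. (\<Phi> has_derivative blinfun_apply (D x)) (at x)"
      and D2: "\<forall>x\<in>U. (D has_derivative blinfun_apply (D2 x)) (at x)" and "continuous_on U D2"
    using assms(1) unfolding C2_on_def by blast
  obtain e where "0 < e" and e: "(\<Union>x\<in>S. ball x e) \<subseteq> U"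
    using compact_subset_open_imp_ball_epsilon_subset[OF assms(3,2,4)] by blast
  define N where "N = {x + y |x y. x \<in> S \<and> y \<in> cball 0 (e / 2)}"
  have "N \<subseteq> U"
  proof
    fix z assume "z \<in> N"
    then obtain x y where "z = x + y" "x \<in> S" "norm y \<le> e / 2" by (auto simp: N_def)
    with \<open>0 < e\<close> have "z \<in> ball x e" by (simp add: dist_norm)
    with e \<open>x \<in> S\<close> show "z \<in> U" by blast
  qed
  have "compact N"
    unfolding N_def by (intro compact_sums assms(3) compact_cball)
  then obtain M2 where M2: "\<And>x. x \<in> N \<Longrightarrow> norm (D2 x) \<le> M2"
    using continuous_on_compact_bound continuous_on_subset[OF \<open>continuous_on U D2\<close> \<open>N \<subseteq> U\<close>] by metis
  have "continuous_on S D" "continuous_on S \<Phi>"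
    using D D2 assms(4)
    by (auto intro!: continuous_at_imp_continuous_on has_derivative_continuous)
  then obtain M M0 where "0 \<le> M" "0 \<le> M0" and M: "\<And>x. x \<in> S \<Longrightarrow> norm (D x) \<le> M"
      and M0: "\<And>x. x \<in> S \<Longrightarrow> \<bar>\<Phi> x\<bar> \<le> M0"
    using continuous_on_compact_bound[OF \<open>compact S\<close>] by (metis real_norm_def)
  define K where "K = max M2 (8 * M0 / e\<^sup>2 + 2 * M / e)"
  show thesis
  proof (rule that[OF M])
    fix \<zeta> q assume "\<zeta> \<in> S" "q \<in> S"
    show "\<bar>\<Phi> q - \<Phi> \<zeta> - D \<zeta> (q - \<zeta>)\<bar> \<le> K * (norm (q - \<zeta>))\<^sup>2"
    proof (cases "norm (q - \<zeta>) \<le> e / 2")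
      case True
      have "closed_segment \<zeta> q \<subseteq> N"
      proof
        fix z assume "z \<in> closed_segment \<zeta> q"
        then have "norm (z - \<zeta>) \<le> e / 2" using segment_bound1 True by fastforce
        with \<open>\<zeta> \<in> S\<close> show "z \<in> N"
          unfolding N_def by (intro CollectI exI[of _ \<zeta>] exI[of _ "z - \<zeta>"]) auto
      qed
      with \<open>N \<subseteq> U\<close> have "\<bar>\<Phi> q - \<Phi> \<zeta> - D \<zeta> (q - \<zeta>)\<bar> \<le> M2 * (norm (q - \<zeta>))\<^sup>2"
        using D D2 M2 by (intro second_order_remainder_bound) auto
      also have "\<dots> \<le> K * (norm (q - \<zeta>))\<^sup>2"
        by (intro mult_right_mono) (auto simp: K_def)
      finally show ?thesis .
    next
      case False
      define n where "n = norm (q - \<zeta>)"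
      have "e / 2 < n" using False by (simp add: n_def)
      then have "(e / 2)\<^sup>2 \<le> n\<^sup>2"
        using \<open>0 < e\<close> by (intro power_mono) auto
      then have far: "1 \<le> 4 / e\<^sup>2 * n\<^sup>2" "1 \<le> 2 / e * n"
        using \<open>0 < e\<close> \<open>e / 2 < n\<close> by (auto simp: field_simps)
      have "\<bar>D \<zeta> (q - \<zeta>)\<bar> \<le> M * n"
        using norm_blinfun[of "D \<zeta>" "q - \<zeta>"] M[OF \<open>\<zeta> \<in> S\<close>]
        by (simp add: n_def) (meson mult_right_mono norm_ge_zero order_trans)
      with M0[OF \<open>q \<in> S\<close>] M0[OF \<open>\<zeta> \<in> S\<close>]
      have "\<bar>\<Phi> q - \<Phi> \<zeta> - D \<zeta> (q - \<zeta>)\<bar> \<le> 2 * M0 * 1 + M * n * 1"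
        by linarith
      also have "\<dots> \<le> 2 * M0 * (4 / e\<^sup>2 * n\<^sup>2) + M * n * (2 / e * n)"
        using far \<open>0 \<le> M0\<close> \<open>0 \<le> M\<close> \<open>e / 2 < n\<close> \<open>0 < e\<close>
        by (intro add_mono mult_left_mono) auto
      also have "\<dots> = (8 * M0 / e\<^sup>2 + 2 * M / e) * n\<^sup>2"
        by (simp add: field_simps power2_eq_square)
      also have "\<dots> \<le> K * n\<^sup>2"
        by (intro mult_right_mono) (auto simp: K_def)
      finally show ?thesis
        by (simp add: n_def)
    qed
  qed
qed

lemma C2_on_uminus:
  assumes "C2_on U \<Phi>"
  shows "C2_on U (\<lambda>x. - \<Phi> x)"
proof -
  obtain D D2 where "\<forall>x\<in>U. (\<Phi> has_derivative blinfun_apply (D x)) (at x)"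
      "\<forall>x\<in>U. (D has_derivative blinfun_apply (D2 x)) (at x)" "continuous_on U D2"
    using assms unfolding C2_on_def by blast
  then show ?thesis
    unfolding C2_on_def
    by (intro exI[of _ "\<lambda>x. - D x"] exI[of _ "\<lambda>x. - D2 x"])
      (auto intro!: continuous_intros has_derivative_minus simp: uminus_blinfun.rep_eq fun_eq_iff)
qed

definition affine_minorants :: "real \<Rightarrow> ('a::real_normed_vector \<Rightarrow> real) \<Rightarrow> 'a set \<Rightarrow> ('a \<Rightarrow> real) set" where
  "affine_minorants L \<phi> S = {g. affine_function g \<and> L-lipschitz_on UNIV g \<and> (\<forall>q\<in>S. g q \<le> \<phi> q)}"

lemma C2_on_sphere_touching_minorants:
  assumes "C2_on_sphere \<phi>"
  obtains L where "0 \<le> L" "\<And>\<zeta>. \<zeta> \<in> sphere 0 1 \<Longrightarrow> \<exists>g\<in>affine_minorants L \<phi> (sphere 0 1). g \<zeta> = \<phi> \<zeta>"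
proof -
  obtain U \<Phi> where "open U" "sphere 0 1 \<subseteq> U" "C2_on U \<Phi>" and \<Phi>: "\<And>z. z \<in> sphere 0 1 \<Longrightarrow> \<Phi> z = \<phi> z"
    using assms unfolding C2_on_sphere_def by blast
  then obtain D :: "oct \<times> oct \<Rightarrow> (oct \<times> oct) \<Rightarrow>\<^sub>L real" and M K
    where M: "\<And>\<zeta>. \<zeta> \<in> sphere 0 1 \<Longrightarrow> norm (D \<zeta>) \<le> M"
    and Taylor: "\<And>\<zeta> q. \<zeta> \<in> sphere 0 1 \<Longrightarrow> q \<in> sphere 0 1 \<Longrightarrow>
      \<bar>\<Phi> q - \<Phi> \<zeta> - D \<zeta> (q - \<zeta>)\<bar> \<le> K * (norm (q - \<zeta>))\<^sup>2"
    using C2_on_uniform_Taylor_bound[OF \<open>C2_on U \<Phi>\<close> \<open>open U\<close> compact_sphere \<open>sphere 0 1 \<subseteq> U\<close>]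
    by blast
  define K' where "K' = max K 0"
  define M' where "M' = max M 0"
  show thesis
  proof (rule that[of "M' + 2 * K'"])
    show "0 \<le> M' + 2 * K'" by (simp add: M'_def K'_def)
    fix \<zeta> :: "oct \<times> oct" assume "\<zeta> \<in> sphere 0 1"
    define g where "g q = \<phi> \<zeta> + D \<zeta> (q - \<zeta>) - 2 * K' * (1 - inner q \<zeta>)" for q
    have "affine_function g"
    proof -
      have "linear (\<lambda>q. D \<zeta> q + 2 * K' * inner q \<zeta>)"
        by (rule linearI) (simp_all add: blinfun.add_right blinfun.scaleR_right inner_add_left algebra_simps)
      then show ?thesis
        unfolding affine_function_def g_def
        by (intro exI[of _ "\<phi> \<zeta> - D \<zeta> \<zeta> - 2 * K'"] exI[of _ "\<lambda>q. D \<zeta> q + 2 * K' * inner q \<zeta>"])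
          (auto simp: blinfun.diff_right algebra_simps)
    qed
    moreover have "(M' + 2 * K')-lipschitz_on UNIV g"
    proof (rule lipschitz_onI)
      fix x y :: "oct \<times> oct"
      have "g x - g y = D \<zeta> (x - y) + 2 * K' * inner (x - y) \<zeta>"
        by (simp add: g_def blinfun.diff_right algebra_simps)
      moreover have "\<bar>D \<zeta> (x - y)\<bar> \<le> M' * dist x y"
        using norm_blinfun[of "D \<zeta>" "x - y"] M[OF \<open>\<zeta> \<in> sphere 0 1\<close>]
        by (simp add: dist_norm M'_def) (meson max.cobounded1 mult_right_mono norm_ge_zero order_trans)
      moreover have "\<bar>2 * K' * inner (x - y) \<zeta>\<bar> \<le> 2 * K' * dist x y"
        using Cauchy_Schwarz_ineq2[of "x - y" \<zeta>] \<open>\<zeta> \<in> sphere 0 1\<close>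
        by (simp add: abs_mult dist_norm K'_def mult_left_mono)
      ultimately have "\<bar>g x - g y\<bar> \<le> M' * dist x y + 2 * K' * dist x y"
        using abs_triangle_ineq[of "D \<zeta> (x - y)" "2 * K' * inner (x - y) \<zeta>"] by linarith
      then show "dist (g x) (g y) \<le> (M' + 2 * K') * dist x y"
        by (simp add: dist_real_def distrib_right)
    qed (simp add: M'_def K'_def)
    moreover have "g q \<le> \<phi> q" if "q \<in> sphere 0 1" for q
    proof -
      have "2 * (1 - inner q \<zeta>) = (norm (q - \<zeta>))\<^sup>2"
        using that \<open>\<zeta> \<in> sphere 0 1\<close>
        by (simp add: dot_norm_neg field_simps)
      then have "g q = \<Phi> \<zeta> + D \<zeta> (q - \<zeta>) - K' * (norm (q - \<zeta>))\<^sup>2"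
        using \<Phi>[OF \<open>\<zeta> \<in> sphere 0 1\<close>] by (simp add: g_def)
      moreover have "K * (norm (q - \<zeta>))\<^sup>2 \<le> K' * (norm (q - \<zeta>))\<^sup>2"
        by (intro mult_right_mono) (auto simp: K'_def)
      moreover have "- (K * (norm (q - \<zeta>))\<^sup>2) \<le> \<Phi> q - \<Phi> \<zeta> - D \<zeta> (q - \<zeta>)"
        using Taylor[OF \<open>\<zeta> \<in> sphere 0 1\<close> that] by (simp only: abs_le_iff) linarith
      ultimately show ?thesis
        using \<Phi>[OF that] by linarith
    qed
    moreover have "g \<zeta> = \<phi> \<zeta>"
      using \<open>\<zeta> \<in> sphere 0 1\<close> by (simp add: g_def dot_square_norm)
    ultimately show "\<exists>g\<in>affine_minorants (M' + 2 * K') \<phi> (sphere 0 1). g \<zeta> = \<phi> \<zeta>"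
      unfolding affine_minorants_def by blast
  qed
qed

lemma OPSH_affine_function:
  assumes "affine_function g"
  shows "OPSH \<Omega> (\<lambda>x. ereal (g x))"
  unfolding OPSH_iff_lines
proof (intro conjI ballI)
  show "usc_on \<Omega> (\<lambda>x. ereal (g x))"
    using continuous_on_affine_function[OF assms] by (rule usc_on_continuous)
  fix l assume "l \<in> octonionic_lines"
  then obtain c L where "linear L" "l = (\<lambda>x. c + L x)"
    by (rule octonionic_line_affine)
  then have "affine_function (g \<circ> l)"
    using affine_function_compose[OF assms] by (simp add: o_def)
  then show "subharmonic_on (l -` \<Omega>) ((\<lambda>x. ereal (g x)) \<circ> l)"
    using subharmonic_on_harmonic[OF harmonic_on_affine_function continuous_on_affine_function]
    by (simp add: o_def)
qed simp

lemma subharmonic_on_SUP: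
  fixes f :: "'i \<Rightarrow> 'a::euclidean_space \<Rightarrow> real"
  assumes sub: "\<And>i. i \<in> I \<Longrightarrow> subharmonic_on U (\<lambda>x. ereal (f i x))"
    and bdd: "\<And>x. x \<in> U \<Longrightarrow> bdd_above ((\<lambda>i. f i x) ` I)" and "I \<noteq> {}"
    and cont: "continuous_on U (\<lambda>x. SUP i\<in>I. f i x)"
  shows "subharmonic_on U (\<lambda>x. ereal (SUP i\<in>I. f i x))"
  unfolding subharmonic_on_def
proof (intro conjI ballI allI impI)
  show "usc_on U (\<lambda>x. ereal (SUP i\<in>I. f i x))"
    using cont by (rule usc_on_continuous)
  fix x r h y
  assume ball: "0 < r" "cball x r \<subseteq> U" "continuous_on (cball x r) h" "harmonic_on (ball x r) h"
    and le: "\<forall>y\<in>sphere x r. ereal (SUP i\<in>I. f i y) \<le> ereal (h y)" and "y \<in> cball x r"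
  have "f i y \<le> h y" if "i \<in> I" for i
  proof -
    have "ereal (f i y) \<le> ereal (h y)"
    proof (rule subharmonic_onD[OF sub[OF that] ball])
      fix z assume "z \<in> sphere x r"
      then have "z \<in> U" using ball(2) by auto
      have "f i z \<le> (SUP i\<in>I. f i z)"
        using bdd[OF \<open>z \<in> U\<close>] that by (rule cSUP_upper2) simp
      with le \<open>z \<in> sphere x r\<close> show "ereal (f i z) \<le> ereal (h z)" by force
    qed fact
    then show ?thesis by simp
  qed
  then show "ereal (SUP i\<in>I. f i y) \<le> ereal (h y)"
    using \<open>I \<noteq> {}\<close> by (simp add: cSUP_least)
qed simp

lemma OPSH_SUP:
  fixes f :: "'i \<Rightarrow> oct \<times> oct \<Rightarrow> real"
  assumes "\<And>i. i \<in> I \<Longrightarrow> OPSH \<Omega> (\<lambda>x. ereal (f i x))" "I \<noteq> {}"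
    and bdd: "\<And>x. bdd_above ((\<lambda>i. f i x) ` I)" and cont: "continuous_on UNIV (\<lambda>x. SUP i\<in>I. f i x)"
  shows "OPSH \<Omega> (\<lambda>x. ereal (SUP i\<in>I. f i x))"
  unfolding OPSH_iff_lines
proof (intro conjI ballI)
  show "usc_on \<Omega> (\<lambda>x. ereal (SUP i\<in>I. f i x))"
    using continuous_on_subset[OF cont] by (intro usc_on_continuous) auto
  fix l assume l: "l \<in> octonionic_lines"
  have "subharmonic_on (l -` \<Omega>) (\<lambda>x. ereal (SUP i\<in>I. f i (l x)))"
  proof (rule subharmonic_on_SUP[OF _ bdd \<open>I \<noteq> {}\<close>])
    show "subharmonic_on (l -` \<Omega>) (\<lambda>x. ereal (f i (l x)))" if "i \<in> I" for i
      using assms(1)[OF that] l unfolding OPSH_iff_lines by (simp add: o_def)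
    show "continuous_on (l -` \<Omega>) (\<lambda>x. SUP i\<in>I. f i (l x))"
      using continuous_on_compose[OF continuous_on_octonionic_line[OF l] continuous_on_subset[OF cont]]
      by (simp add: o_def)
  qed
  then show "subharmonic_on (l -` \<Omega>) ((\<lambda>x. ereal (SUP i\<in>I. f i x)) \<circ> l)"
    by (simp add: o_def)
qed simp

lemma usc_on_Limsup_le:
  assumes "usc_on U f" "z \<in> U" "D \<subseteq> U"
  shows "Limsup (at z within D) f \<le> f z"
  unfolding Limsup_le_iff
proof (intro allI impI)
  fix c assume "f z < c"
  with assms(1,2) have "\<forall>\<^sub>F y in at z within U. f y < c"
    unfolding usc_on_def by blast
  then show "\<forall>\<^sub>F y in at z within D. f y < c"
    using assms(3) by (rule filter_leD[OF at_le, rotated])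
qed

lemma usc_on_glue:
  fixes f g :: "'a::topological_space \<Rightarrow> ereal"
  assumes g: "usc_on V g" and f: "usc_on V' f" and "open V'"
    and near: "\<And>y. y \<in> V \<Longrightarrow> y \<notin> V' \<Longrightarrow> \<forall>\<^sub>F z in nhds y. z \<in> V' \<longrightarrow> f z \<le> g z"
  shows "usc_on V (\<lambda>y. if y \<in> V' then max (g y) (f y) else g y)"
  unfolding usc_on_def
proof (intro ballI allI impI)
  fix y c assume "y \<in> V" and less: "(if y \<in> V' then max (g y) (f y) else g y) < c"
  then have "\<forall>\<^sub>F z in at y within V. g z < c"
    using g unfolding usc_on_def by (auto split: if_splits)
  moreover have "\<forall>\<^sub>F z in at y within V. z \<in> V' \<longrightarrow> f z < c"
  proof (cases "y \<in> V'")
    case True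
    with less have "f y < c" by simp
    with f True have "\<forall>\<^sub>F z in at y within V'. f z < c"
      unfolding usc_on_def by blast
    then have "\<forall>\<^sub>F z in at y. f z < c"
      using at_within_open[OF True \<open>open V'\<close>] by simp
    then show ?thesis
      by (auto simp: eventually_at_filter elim: eventually_mono)
  next
    case False
    with near \<open>y \<in> V\<close> have "\<forall>\<^sub>F z in nhds y. z \<in> V' \<longrightarrow> f z \<le> g z"
      by blast
    then have "\<forall>\<^sub>F z in at y within V. z \<in> V' \<longrightarrow> f z \<le> g z"
      unfolding eventually_at_filter by (rule eventually_mono) auto
    with \<open>\<forall>\<^sub>F z in at y within V. g z < c\<close> show ?thesis
      by eventually_elim auto
  qed
  ultimately show "\<forall>\<^sub>F z in at y within V. (if z \<in> V' then max (g z) (f z) else g z) < c"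
    by eventually_elim auto
qed

lemma subharmonic_on_glue:
  fixes f g :: "'a::euclidean_space \<Rightarrow> ereal"
  assumes g: "subharmonic_on V g" and f: "subharmonic_on V' f" and "open V'"
    and near: "\<And>y. y \<in> V \<Longrightarrow> y \<notin> V' \<Longrightarrow> \<forall>\<^sub>F z in nhds y. z \<in> V' \<longrightarrow> f z \<le> g z"
  shows "subharmonic_on V (\<lambda>y. if y \<in> V' then max (g y) (f y) else g y)" (is "subharmonic_on V ?W")
  unfolding subharmonic_on_def
proof (intro conjI ballI allI impI)
  show "?W y < \<infinity>" if "y \<in> V" for y
  proof -
    have "g y < \<infinity>" "y \<in> V' \<Longrightarrow> f y < \<infinity>"
      using g f that by (simp_all add: subharmonic_on_def)
    then show ?thesis by (simp add: max_def)
  qed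
  show "usc_on V ?W"
    using subharmonic_on_usc_on[OF g] subharmonic_on_usc_on[OF f] \<open>open V'\<close> near by (rule usc_on_glue)
  fix x r h y
  assume ball: "0 < r" "cball x r \<subseteq> V" "continuous_on (cball x r) h" "harmonic_on (ball x r) h"
    and le: "\<forall>y\<in>sphere x r. ?W y \<le> ereal (h y)" and "y \<in> cball x r"
  have le_g: "g y \<le> ereal (h y)" if "y \<in> cball x r" for y
    by (rule subharmonic_onD[OF g ball _ that]) (use le in \<open>auto split: if_splits\<close>)
  have le_f: "f y \<le> ereal (h y)" if "y \<in> ball x r \<inter> V'" for y
  proof (rule subharmonic_maximum_principle[OF f _ _ _ _ _ _ that])
    have "closure (ball x r \<inter> V') \<subseteq> cball x r"
      by (rule closure_minimal) auto
    with ball(3) show "continuous_on (closure (ball x r \<inter> V')) h"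
      by (rule continuous_on_subset)
    show "harmonic_on (ball x r \<inter> V') h"
      using ball(4) by (rule harmonic_on_subset) auto
    fix z assume "z \<in> frontier (ball x r \<inter> V')"
    then have "z \<in> cball x r" "z \<notin> ball x r \<inter> V'"
      using \<open>closure (ball x r \<inter> V') \<subseteq> cball x r\<close> \<open>open V'\<close> by (auto simp: frontier_def interior_open)
    show "Limsup (at z within ball x r \<inter> V') f \<le> ereal (h z)"
    proof (cases "z \<in> V'")
      case True
      with \<open>z \<in> cball x r\<close> \<open>z \<notin> ball x r \<inter> V'\<close> have "z \<in> sphere x r" by auto
      have "Limsup (at z within ball x r \<inter> V') f \<le> f z"
        using subharmonic_on_usc_on[OF f] True by (rule usc_on_Limsup_le) auto
      also have "\<dots> \<le> ?W z" using True by simp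
      also have "\<dots> \<le> ereal (h z)" using le \<open>z \<in> sphere x r\<close> by blast
      finally show ?thesis .
    next
      case False
      with near ball(2) \<open>z \<in> cball x r\<close> have "\<forall>\<^sub>F w in nhds z. w \<in> V' \<longrightarrow> f w \<le> g w"
        by blast
      then have "\<forall>\<^sub>F w in at z within ball x r \<inter> V'. f w \<le> ereal (h w)"
        unfolding eventually_at_filter
        by (rule eventually_mono) (use le_g in \<open>force intro: order_trans\<close>)
      then have "Limsup (at z within ball x r \<inter> V') f \<le> Limsup (at z within ball x r \<inter> V') (\<lambda>w. ereal (h w))"
        by (rule Limsup_mono)
      also have "\<dots> \<le> ereal (h z)"
        using usc_on_continuous[OF ball(3)] \<open>z \<in> cball x r\<close> by (rule usc_on_Limsup_le) auto
      finally show ?thesis .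
    qed
  qed (use \<open>open V'\<close> in auto)
  show "?W y \<le> ereal (h y)"
  proof (cases "y \<in> sphere x r")
    case False
    with \<open>y \<in> cball x r\<close> le_g le_f show ?thesis by auto
  qed (use le in blast)
qed

lemma OPSH_glue:
  assumes g: "OPSH \<Omega> g" and f: "OPSH \<Omega>' f" and "open \<Omega>'"
    and near: "\<And>y. y \<in> \<Omega> \<Longrightarrow> y \<notin> \<Omega>' \<Longrightarrow> \<forall>\<^sub>F z in nhds y. z \<in> \<Omega>' \<longrightarrow> f z \<le> g z"
  shows "OPSH \<Omega> (\<lambda>y. if y \<in> \<Omega>' then max (g y) (f y) else g y)" (is "OPSH \<Omega> ?W")
  unfolding OPSH_iff_lines
proof (intro conjI ballI)
  show "?W y < \<infinity>" if "y \<in> \<Omega>" for y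
  proof -
    have "g y < \<infinity>" "y \<in> \<Omega>' \<Longrightarrow> f y < \<infinity>"
      using g f that by (simp_all add: OPSH_iff_lines)
    then show ?thesis by (simp add: max_def)
  qed
  show "usc_on \<Omega> ?W"
    using g f \<open>open \<Omega>'\<close> near unfolding OPSH_iff_lines by (intro usc_on_glue) auto
  fix l assume l: "l \<in> octonionic_lines"
  have "subharmonic_on (l -` \<Omega>) (\<lambda>y. if y \<in> l -` \<Omega>' then max (g (l y)) (f (l y)) else g (l y))"
  proof (rule subharmonic_on_glue)
    show "subharmonic_on (l -` \<Omega>) (\<lambda>y. g (l y))" "subharmonic_on (l -` \<Omega>') (\<lambda>y. f (l y))"
      using g f l unfolding OPSH_iff_lines by (simp_all add: o_def)
    show "open (l -` \<Omega>')"
      using \<open>open \<Omega>'\<close> continuous_on_octonionic_line[OF l] by (rule open_vimage)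
    fix y assume "y \<in> l -` \<Omega>" "y \<notin> l -` \<Omega>'"
    then have "\<forall>\<^sub>F z in nhds (l y). z \<in> \<Omega>' \<longrightarrow> f z \<le> g z"
      using near by simp
    then obtain S where "open S" "l y \<in> S" and S: "\<forall>z\<in>S. z \<in> \<Omega>' \<longrightarrow> f z \<le> g z"
      unfolding eventually_nhds by blast
    moreover have "open (l -` S)"
      using \<open>open S\<close> continuous_on_octonionic_line[OF l] by (rule open_vimage)
    ultimately show "\<forall>\<^sub>F z in nhds y. z \<in> l -` \<Omega>' \<longrightarrow> f (l z) \<le> g (l z)"
      unfolding eventually_nhds by (intro exI[of _ "l -` S"]) auto
  qed
  then show "subharmonic_on (l -` \<Omega>) (?W \<circ> l)"
    by (simp add: o_def)
qed

lemma usc_on_compose_injective: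
  assumes "usc_on U w" "continuous_on UNIV \<psi>" "inj \<psi>"
  shows "usc_on (\<psi> -` U) (\<lambda>x. w (\<psi> x))"
  unfolding usc_on_def
proof (intro ballI allI impI)
  fix x c assume "x \<in> \<psi> -` U" "w (\<psi> x) < c"
  with assms(1) have "\<forall>\<^sub>F z in at (\<psi> x) within U. w z < c"
    unfolding usc_on_def by blast
  moreover have "filterlim \<psi> (at (\<psi> x) within U) (at x within \<psi> -` U)"
  proof (rule filterlim_at_withinI)
    show "filterlim \<psi> (nhds (\<psi> x)) (at x within \<psi> -` U)"
      using assms(2) by (auto intro: tendsto_within_subset simp: continuous_on_def)
    show "\<forall>\<^sub>F y in at x within \<psi> -` U. \<psi> y \<in> U - {\<psi> x}"
      using assms(3) unfolding eventually_at_filter by (auto simp: inj_eq)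
  qed
  ultimately show "\<forall>\<^sub>F y in at x within \<psi> -` U. w (\<psi> y) < c"
    by (rule filterlim_iff[THEN iffD1, rule_format, rotated])
qed

lemma OPSH_translate:
  assumes "OPSH \<Omega> w"
  shows "OPSH ((\<lambda>x. x + h) -` \<Omega>) (\<lambda>x. w (x + h))"
  unfolding OPSH_iff_lines
proof (intro conjI ballI)
  show "w (x + h) < \<infinity>" if "x \<in> (\<lambda>x. x + h) -` \<Omega>" for x
    using assms that by (simp add: OPSH_iff_lines)
  show "usc_on ((\<lambda>x. x + h) -` \<Omega>) (\<lambda>x. w (x + h))"
    using assms unfolding OPSH_iff_lines
    by (intro usc_on_compose_injective continuous_intros) (auto simp: inj_on_def)
  fix l assume "l \<in> octonionic_lines"
  then have "(\<lambda>x. l x + h) \<in> octonionic_lines"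
    by (rule octonionic_line_translate)
  with assms show "subharmonic_on (l -` (\<lambda>x. x + h) -` \<Omega>) ((\<lambda>x. w (x + h)) \<circ> l)"
    unfolding OPSH_iff_lines by (simp add: o_def vimage_def)
qed

lemma subharmonic_on_diff_const:
  assumes "subharmonic_on U f"
  shows "subharmonic_on U (\<lambda>x. f x - ereal c)"
  unfolding subharmonic_on_def
proof (intro conjI ballI allI impI)
  show "f x - ereal c < \<infinity>" if "x \<in> U" for x
  proof -
    have "f x < \<infinity>" using assms that by (simp add: subharmonic_on_def)
    then show ?thesis by (cases "f x") simp_all
  qed
  show "usc_on U (\<lambda>x. f x - ereal c)"
    using subharmonic_on_usc_on[OF assms] continuous_on_const by (rule usc_on_diff_continuous)
  fix x r h y
  assume "0 < r" "cball x r \<subseteq> U" "continuous_on (cball x r) h" "harmonic_on (ball x r) h"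
    and le: "\<forall>y\<in>sphere x r. f y - ereal c \<le> ereal (h y)" and "y \<in> cball x r"
  have "f y \<le> ereal (h y + c)"
  proof (rule subharmonic_onD[OF assms \<open>0 < r\<close> \<open>cball x r \<subseteq> U\<close>])
    show "continuous_on (cball x r) (\<lambda>y. h y + c)"
      using \<open>continuous_on (cball x r) h\<close> by (intro continuous_intros)
    show "harmonic_on (ball x r) (\<lambda>y. h y + c)"
      using \<open>harmonic_on (ball x r) h\<close> by (intro harmonic_on_add harmonic_on_const)
    show "f z \<le> ereal (h z + c)" if "z \<in> sphere x r" for z
      using le that by (simp add: ereal_minus_le)
  qed fact
  then show "f y - ereal c \<le> ereal (h y)"
    by (simp add: ereal_minus_le)
qed

lemma OPSH_diff_const:
  assumes "OPSH \<Omega> w"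
  shows "OPSH \<Omega> (\<lambda>x. w x - ereal c)"
  unfolding OPSH_iff_lines
proof (intro conjI ballI)
  show "w x - ereal c < \<infinity>" if "x \<in> \<Omega>" for x
  proof -
    have "w x < \<infinity>" using assms that by (simp add: OPSH_iff_lines)
    then show ?thesis by (cases "w x") simp_all
  qed
  show "usc_on \<Omega> (\<lambda>x. w x - ereal c)"
    using assms continuous_on_const unfolding OPSH_iff_lines by (intro usc_on_diff_continuous) auto
  fix l assume "l \<in> octonionic_lines"
  with assms have "subharmonic_on (l -` \<Omega>) (w \<circ> l)"
    unfolding OPSH_iff_lines by blast
  then show "subharmonic_on (l -` \<Omega>) ((\<lambda>x. w x - ereal c) \<circ> l)"
    using subharmonic_on_diff_const by (simp add: o_def)
qed

definition perron_family :: "(oct \<times> oct) set \<Rightarrow> (oct \<times> oct \<Rightarrow> real) \<Rightarrow> (oct \<times> oct \<Rightarrow> ereal) set" where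
  "perron_family \<Omega> \<phi> = {w. OPSH \<Omega> w \<and> (\<forall>z\<in>frontier \<Omega>. Limsup (at z within \<Omega>) w \<le> ereal (\<phi> z))}"

lemma perron_bremermann_eq_SUP: "perron_bremermann \<Omega> \<phi> x = (SUP w\<in>perron_family \<Omega> \<phi>. w x)"
  unfolding perron_bremermann_def perron_family_def by (simp add: image_Collect)

lemma Limsup_compose_le:
  fixes g :: "'b \<Rightarrow> 'c::complete_linorder"
  assumes "filterlim f F' F"
  shows "Limsup F (\<lambda>x. g (f x)) \<le> Limsup F' g"
  unfolding Limsup_le_iff
proof (intro allI impI)
  fix y assume "Limsup F' g < y"
  then have "\<forall>\<^sub>F x in F'. g x < y" by (rule Limsup_lessD)
  then show "\<forall>\<^sub>F x in F. g (f x) < y"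
    using assms by (rule filterlim_iff[THEN iffD1, rule_format, rotated])
qed

lemma frontier_vimage_continuous:
  assumes "continuous_on UNIV l" "open \<Omega>" "z \<in> frontier (l -` \<Omega>)"
  shows "l z \<in> frontier \<Omega>"
proof -
  have "open (l -` \<Omega>)" using assms(2,1) by (rule open_vimage)
  then have "z \<notin> l -` \<Omega>" "z \<in> closure (l -` \<Omega>)"
    using assms(3) by (auto simp: frontier_def interior_open)
  moreover have "l ` closure (l -` \<Omega>) \<subseteq> closure \<Omega>"
    using assms(1) by (intro image_closure_subset) (auto intro: continuous_on_subset closure_subset[THEN subsetD])
  ultimately show ?thesis
    using assms(2) by (auto simp: frontier_def interior_open)
qed

lemma Limsup_vimage_continuous_le:
  fixes w :: "'b::topological_space \<Rightarrow> 'c::complete_linorder"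
  assumes "continuous_on UNIV l" "open \<Omega>" "z \<in> frontier (l -` \<Omega>)"
  shows "Limsup (at z within l -` \<Omega>) (\<lambda>y. w (l y)) \<le> Limsup (at (l z) within \<Omega>) w"
proof (rule Limsup_compose_le, rule filterlim_at_withinI)
  show "filterlim l (nhds (l z)) (at z within l -` \<Omega>)"
    using assms(1) by (auto intro: tendsto_within_subset simp: continuous_on_def)
  have "l z \<notin> \<Omega>"
    using frontier_vimage_continuous[OF assms] assms(2) by (auto simp: frontier_def interior_open)
  then show "\<forall>\<^sub>F y in at z within l -` \<Omega>. l y \<in> \<Omega> - {l z}"
    unfolding eventually_at_filter by auto
qed

lemma perron_family_le_affine:
  assumes "w \<in> perron_family \<Omega> \<phi>" "open \<Omega>" "bounded \<Omega>" "affine_function a"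
    and above: "\<And>z. z \<in> frontier \<Omega> \<Longrightarrow> \<phi> z \<le> a z" and "q \<in> \<Omega>"
  shows "w q \<le> ereal (a q)"
proof -
  define l where "l = vline (fst q, 0)"
  have l: "l \<in> octonionic_lines" "l y = (fst q, y)" for y
    by (auto simp: octonionic_lines_def l_def vline_def)
  have "continuous_on UNIV l"
    using l(1) by (rule continuous_on_octonionic_line)
  define V where "V = l -` \<Omega>"
  have "open V"
    unfolding V_def using \<open>open \<Omega>\<close> \<open>continuous_on UNIV l\<close> by (rule open_vimage)
  have "bounded V"
  proof -
    obtain R where R: "\<And>x. x \<in> \<Omega> \<Longrightarrow> norm x \<le> R"
      using \<open>bounded \<Omega>\<close> by (auto simp: bounded_iff)
    have "norm y \<le> R" if "y \<in> V" for y
    proof -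
      have "norm (fst q, y) \<le> R"
        using that R by (simp add: V_def l(2))
      with norm_snd_le show ?thesis by (rule order_trans)
    qed
    then show ?thesis
      unfolding bounded_iff by blast
  qed
  obtain c L where "linear L" "l = (\<lambda>x. c + L x)"
    using l(1) by (rule octonionic_line_affine)
  then have "affine_function (\<lambda>y. a (l y))"
    using affine_function_compose[OF \<open>affine_function a\<close>] by simp
  have "w (l (snd q)) \<le> ereal (a (l (snd q)))"
  proof (rule subharmonic_maximum_principle[where D = V])
    show "subharmonic_on V (\<lambda>y. w (l y))"
      using assms(1) l(1) unfolding perron_family_def OPSH_iff_lines V_def by (simp add: o_def)
    show "continuous_on (closure V) (\<lambda>y. a (l y))" "harmonic_on V (\<lambda>y. a (l y))"
      using \<open>affine_function (\<lambda>y. a (l y))\<close>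
      by (simp_all add: continuous_on_affine_function harmonic_on_affine_function)
    fix z assume "z \<in> frontier V"
    have "Limsup (at z within V) (\<lambda>y. w (l y)) \<le> Limsup (at (l z) within \<Omega>) w"
      using \<open>continuous_on UNIV l\<close> \<open>open \<Omega>\<close> \<open>z \<in> frontier V\<close> unfolding V_def
      by (rule Limsup_vimage_continuous_le)
    also have "\<dots> \<le> ereal (\<phi> (l z))"
      using assms(1) frontier_vimage_continuous[OF \<open>continuous_on UNIV l\<close> \<open>open \<Omega>\<close>] \<open>z \<in> frontier V\<close>
      unfolding perron_family_def V_def by blast
    also have "\<dots> \<le> ereal (a (l z))"
      using above frontier_vimage_continuous[OF \<open>continuous_on UNIV l\<close> \<open>open \<Omega>\<close>] \<open>z \<in> frontier V\<close>
      unfolding V_def by simp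
    finally show "Limsup (at z within V) (\<lambda>y. w (l y)) \<le> ereal (a (l z))" .
  qed (use \<open>open V\<close> \<open>bounded V\<close> \<open>q \<in> \<Omega>\<close> in \<open>auto simp: V_def l(2)\<close>)
  then show ?thesis
    by (simp add: l(2))
qed

lemma lipschitz_on_SUP:
  fixes f :: "'i \<Rightarrow> 'a::metric_space \<Rightarrow> real"
  assumes lip: "\<And>i. i \<in> I \<Longrightarrow> L-lipschitz_on S (f i)" and "I \<noteq> {}"
    and bdd: "\<And>x. x \<in> S \<Longrightarrow> bdd_above ((\<lambda>i. f i x) ` I)" and "0 \<le> L"
  shows "L-lipschitz_on S (\<lambda>x. SUP i\<in>I. f i x)"
proof (rule lipschitz_onI)
  have one_sided: "(SUP i\<in>I. f i x) \<le> (SUP i\<in>I. f i y) + L * dist x y" if "x \<in> S" "y \<in> S" for x y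
  proof (rule cSUP_least[OF \<open>I \<noteq> {}\<close>])
    fix i assume "i \<in> I"
    have "f i x \<le> f i y + L * dist x y"
      using lipschitz_onD[OF lip[OF \<open>i \<in> I\<close>] that] by (simp add: dist_real_def abs_le_iff)
    also have "f i y \<le> (SUP i\<in>I. f i y)"
      using \<open>i \<in> I\<close> bdd[OF \<open>y \<in> S\<close>] by (rule cSUP_upper)
    finally show "f i x \<le> (SUP i\<in>I. f i y) + L * dist x y" by simp
  qed
  fix x y assume "x \<in> S" "y \<in> S"
  with one_sided[of x y] one_sided[of y x]
  show "dist (SUP i\<in>I. f i x) (SUP i\<in>I. f i y) \<le> L * dist x y"
    by (simp add: dist_real_def dist_commute abs_le_iff)
qed fact

lemma affine_minorants_mono: "L \<le> L' \<Longrightarrow> affine_minorants L \<phi> S \<subseteq> affine_minorants L' \<phi> S"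
  unfolding affine_minorants_def using lipschitz_on_le by blast

lemma affine_minorant_le_cone:
  assumes "g \<in> affine_minorants L \<phi> S" "\<zeta> \<in> S"
  shows "g x \<le> \<phi> \<zeta> + L * dist x \<zeta>"
proof -
  have "g x \<le> g \<zeta> + L * dist x \<zeta>"
    using lipschitz_onD[of L UNIV g x \<zeta>] assms(1)
    by (simp add: affine_minorants_def dist_real_def abs_le_iff)
  moreover have "g \<zeta> \<le> \<phi> \<zeta>"
    using assms by (simp add: affine_minorants_def)
  ultimately show ?thesis by simp
qed

definition minorant_envelope :: "real \<Rightarrow> ('a::real_normed_vector \<Rightarrow> real) \<Rightarrow> 'a set \<Rightarrow> 'a \<Rightarrow> real" where
  "minorant_envelope L \<phi> S x = (SUP g\<in>affine_minorants L \<phi> S. g x)"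

context
  fixes L :: real and \<phi> :: "'a::real_normed_vector \<Rightarrow> real" and S :: "'a set"
  assumes "0 \<le> L" and "S \<noteq> {}"
    and touching: "\<And>\<zeta>. \<zeta> \<in> S \<Longrightarrow> \<exists>g\<in>affine_minorants L \<phi> S. g \<zeta> = \<phi> \<zeta>"
begin

lemma affine_minorants_nonempty: "affine_minorants L \<phi> S \<noteq> {}"
  using \<open>S \<noteq> {}\<close> touching by blast

lemma bdd_above_affine_minorants: "bdd_above ((\<lambda>g. g x) ` affine_minorants L \<phi> S)"
proof -
  obtain \<zeta> where "\<zeta> \<in> S" using \<open>S \<noteq> {}\<close> by blast
  then show ?thesis
    by (intro bdd_aboveI2[of _ _ "\<phi> \<zeta> + L * dist x \<zeta>"]) (rule affine_minorant_le_cone)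
qed

lemma affine_minorant_le_envelope:
  assumes "g \<in> affine_minorants L \<phi> S"
  shows "g x \<le> minorant_envelope L \<phi> S x"
  unfolding minorant_envelope_def using assms bdd_above_affine_minorants by (rule cSUP_upper)

lemma minorant_envelope_eq:
  assumes "\<zeta> \<in> S"
  shows "minorant_envelope L \<phi> S \<zeta> = \<phi> \<zeta>"
proof (rule antisym)
  show "minorant_envelope L \<phi> S \<zeta> \<le> \<phi> \<zeta>"
    unfolding minorant_envelope_def using affine_minorants_nonempty assms
    by (intro cSUP_least) (auto simp: affine_minorants_def)
  obtain g where "g \<in> affine_minorants L \<phi> S" "g \<zeta> = \<phi> \<zeta>"
    using touching[OF assms] by blast
  then show "\<phi> \<zeta> \<le> minorant_envelope L \<phi> S \<zeta>"
    using affine_minorant_le_envelope by metis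
qed

lemma lipschitz_on_minorant_envelope: "L-lipschitz_on UNIV (minorant_envelope L \<phi> S)"
  unfolding minorant_envelope_def
  using affine_minorants_nonempty bdd_above_affine_minorants \<open>0 \<le> L\<close>
  by (intro lipschitz_on_SUP) (auto simp: affine_minorants_def)

end

lemma OPSH_minorant_envelope:
  fixes \<phi> :: "oct \<times> oct \<Rightarrow> real"
  assumes "0 \<le> L" "S \<noteq> {}" "\<And>\<zeta>. \<zeta> \<in> S \<Longrightarrow> \<exists>g\<in>affine_minorants L \<phi> S. g \<zeta> = \<phi> \<zeta>"
  shows "OPSH \<Omega> (\<lambda>x. ereal (minorant_envelope L \<phi> S x))"
  unfolding minorant_envelope_def
proof (rule OPSH_SUP)
  show "OPSH \<Omega> (\<lambda>x. ereal (g x))" if "g \<in> affine_minorants L \<phi> S" for g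
    using that by (intro OPSH_affine_function) (simp add: affine_minorants_def)
  show "continuous_on UNIV (\<lambda>x. SUP g\<in>affine_minorants L \<phi> S. g x)"
    using lipschitz_on_minorant_envelope[OF assms] unfolding minorant_envelope_def
    by (rule lipschitz_on_continuous_on)
qed (use affine_minorants_nonempty[OF assms] bdd_above_affine_minorants[OF assms] in auto)

lemma lipschitz_on_barrier_glue:
  fixes v G :: "'a::metric_space \<Rightarrow> real"
  assumes "L-lipschitz_on (I \<union> F) G"
    and boundary: "\<And>x. x \<in> F \<Longrightarrow> v x = G x" and above: "\<And>x. x \<in> I \<Longrightarrow> G x \<le> v x"
    and cone: "\<And>x z. x \<in> I \<Longrightarrow> z \<in> F \<Longrightarrow> v x \<le> v z + L * dist x z"
    and interior: "\<And>x y. x \<in> I \<Longrightarrow> y \<in> I \<Longrightarrow> v y \<le> v x + A * dist x y" and "L \<le> A"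
  shows "A-lipschitz_on (I \<union> F) v"
proof -
  have "0 \<le> L" using assms(1) by (rule lipschitz_on_nonneg)
  have G_le: "G x \<le> v x" if "x \<in> I \<union> F" for x
    using that above boundary by fastforce
  have one_sided: "v y \<le> v x + A * dist x y" if x: "x \<in> I \<union> F" and y: "y \<in> I \<union> F" for x y
  proof -
    have "L * dist x y \<le> A * dist x y"
      using \<open>L \<le> A\<close> by (rule mult_right_mono) simp
    consider "y \<in> F" | "y \<in> I" "x \<in> F" | "x \<in> I" "y \<in> I"
      using x y by blast
    then show ?thesis
    proof cases
      case 1
      have "v y = G y" using boundary[OF 1] .
      also have "\<dots> \<le> G x + L * dist x y"
        using lipschitz_onD[OF assms(1) y x] by (simp add: dist_real_def dist_commute abs_le_iff)
      finally show ?thesis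
        using G_le[OF x] \<open>L * dist x y \<le> A * dist x y\<close> by simp
    next
      case 2
      then show ?thesis
        using cone[of y x] \<open>L * dist x y \<le> A * dist x y\<close> by (simp add: dist_commute)
    next
      case 3
      then show ?thesis by (rule interior)
    qed
  qed
  show ?thesis
  proof (rule lipschitz_onI)
    fix x y assume "x \<in> I \<union> F" "y \<in> I \<union> F"
    with one_sided[of x y] one_sided[of y x] show "dist (v x) (v y) \<le> A * dist x y"
      by (simp add: dist_real_def dist_commute abs_le_iff)
  qed (use \<open>0 \<le> L\<close> \<open>L \<le> A\<close> in simp)
qed

locale sphere_barriers =
  fixes \<phi> :: "oct \<times> oct \<Rightarrow> real" and L :: real
  assumes nonneg: "0 \<le> L"
    and minorants: "\<And>\<zeta>. \<zeta> \<in> sphere 0 1 \<Longrightarrow> \<exists>g\<in>affine_minorants L \<phi> (sphere 0 1). g \<zeta> = \<phi> \<zeta>"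
    and majorants: "\<And>\<zeta>. \<zeta> \<in> sphere 0 1 \<Longrightarrow> \<exists>g\<in>affine_minorants L (\<lambda>x. - \<phi> x) (sphere 0 1). g \<zeta> = - \<phi> \<zeta>"
begin

abbreviation envelope :: "oct \<times> oct \<Rightarrow> real" where
  "envelope \<equiv> minorant_envelope L \<phi> (sphere 0 1)"

lemma lipschitz_on_envelope: "L-lipschitz_on UNIV envelope"
  using nonneg minorants by (intro lipschitz_on_minorant_envelope) auto

lemma envelope_eq: "\<zeta> \<in> sphere 0 1 \<Longrightarrow> envelope \<zeta> = \<phi> \<zeta>"
  using nonneg minorants by (intro minorant_envelope_eq) auto

lemma envelope_ge_cone:
  assumes "\<zeta> \<in> sphere 0 1"
  shows "\<phi> \<zeta> - L * dist x \<zeta> \<le> envelope x"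
  using lipschitz_onD[OF lipschitz_on_envelope, of x \<zeta>] envelope_eq[OF assms]
  by (simp add: dist_real_def abs_le_iff)

lemma envelope_in_perron_family: "(\<lambda>x. ereal (envelope x)) \<in> perron_family (ball 0 1) \<phi>"
  unfolding perron_family_def
proof (intro CollectI conjI ballI)
  show "OPSH (ball 0 1) (\<lambda>x. ereal (envelope x))"
    using nonneg minorants by (intro OPSH_minorant_envelope) auto
  fix z :: "oct \<times> oct" assume "z \<in> frontier (ball 0 1)"
  then have "z \<in> sphere 0 1" by simp
  have "usc_on UNIV (\<lambda>x. ereal (envelope x))"
    using lipschitz_on_envelope by (intro usc_on_continuous lipschitz_on_continuous_on)
  then have "Limsup (at z within ball 0 1) (\<lambda>x. ereal (envelope x)) \<le> ereal (envelope z)"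
    by (rule usc_on_Limsup_le) auto
  with envelope_eq[OF \<open>z \<in> sphere 0 1\<close>]
  show "Limsup (at z within ball 0 1) (\<lambda>x. ereal (envelope x)) \<le> ereal (\<phi> z)"
    by simp
qed

lemma perron_family_le_cone:
  assumes "w \<in> perron_family (ball 0 1) \<phi>" "q \<in> ball 0 1" "\<zeta> \<in> sphere 0 1"
  shows "w q \<le> ereal (\<phi> \<zeta> + L * dist q \<zeta>)"
proof -
  obtain g where g: "g \<in> affine_minorants L (\<lambda>x. - \<phi> x) (sphere 0 1)" "g \<zeta> = - \<phi> \<zeta>"
    using majorants[OF assms(3)] by blast
  then have "affine_function g" "L-lipschitz_on UNIV g" and below: "\<forall>z\<in>sphere 0 1. g z \<le> - \<phi> z"
    unfolding affine_minorants_def by blast+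
  have "w q \<le> ereal (- g q)"
    using assms(1) _ _ affine_function_uminus[OF \<open>affine_function g\<close>] _ assms(2)
  proof (rule perron_family_le_affine)
    show "\<phi> z \<le> - g z" if "z \<in> frontier (ball 0 1)" for z
      using bspec[OF below, of z] that by simp
  qed simp_all
  also have "- g q \<le> \<phi> \<zeta> + L * dist q \<zeta>"
    using lipschitz_onD[OF \<open>L-lipschitz_on UNIV g\<close>, of q \<zeta>] g(2)
    by (simp add: dist_real_def abs_le_iff)
  finally show ?thesis by simp
qed

lemma translate_below_envelope_near_sphere:
  assumes w: "w \<in> perron_family (ball 0 1) \<phi>" and "y \<in> ball 0 1" "y + h \<notin> ball 0 1"
  shows "\<forall>\<^sub>F z in nhds y. z + h \<in> ball 0 1 \<longrightarrow>
    w (z + h) - ereal ((2 * L + 1) * norm h) \<le> ereal (envelope z)"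
proof (cases "norm (y + h) = 1")
  case False
  with \<open>y + h \<notin> ball 0 1\<close> have "y \<in> {z. 1 < norm (z + h)}" by simp
  moreover have "open {z. 1 < norm (z + h)}"
    by (intro open_Collect_less continuous_intros)
  ultimately show ?thesis
    unfolding eventually_nhds by (intro exI[of _ "{z. 1 < norm (z + h)}"]) auto
next
  case True
  then have "y + h \<in> sphere 0 1" by simp
  have "h \<noteq> 0" using \<open>y \<in> ball 0 1\<close> True by auto
  have "\<forall>\<^sub>F z in nhds y. dist z y < norm h / 2"
    unfolding eventually_nhds_metric using \<open>h \<noteq> 0\<close> by (intro exI[of _ "norm h / 2"]) auto
  then show ?thesis
  proof (rule eventually_mono, intro impI)
    fix z assume near: "dist z y < norm h / 2" and "z + h \<in> ball 0 1"
    have "w (z + h) \<le> ereal (\<phi> (y + h) + L * dist z y)"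
      using perron_family_le_cone[OF w \<open>z + h \<in> ball 0 1\<close> \<open>y + h \<in> sphere 0 1\<close>]
      by (simp add: dist_norm)
    moreover have "\<phi> (y + h) - L * (dist z y + norm h) \<le> envelope z"
    proof -
      have "dist z (y + h) \<le> dist z y + norm h"
        using norm_triangle_ineq4[of "z - y" h] by (simp add: dist_norm algebra_simps)
      then have "L * dist z (y + h) \<le> L * (dist z y + norm h)"
        using nonneg by (rule mult_left_mono)
      with envelope_ge_cone[OF \<open>y + h \<in> sphere 0 1\<close>, of z] show ?thesis by simp
    qed
    moreover have "2 * (L * dist z y) \<le> L * norm h"
      using near nonneg mult_left_mono[of "2 * dist z y" "norm h" L] by simp
    ultimately have "\<phi> (y + h) + L * dist z y \<le> envelope z + 2 * (L * norm h) + norm h"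
      by (simp add: distrib_left) (use norm_ge_zero[of h] in linarith)
    then have "\<phi> (y + h) + L * dist z y \<le> envelope z + (2 * L + 1) * norm h"
      by (simp add: algebra_simps)
    with \<open>w (z + h) \<le> ereal (\<phi> (y + h) + L * dist z y)\<close>
    have "w (z + h) \<le> ereal (envelope z + (2 * L + 1) * norm h)"
      using order_trans by fastforce
    then show "w (z + h) - ereal ((2 * L + 1) * norm h) \<le> ereal (envelope z)"
      by (simp add: ereal_minus_le)
  qed
qed

lemma translate_le_cone:
  assumes w: "w \<in> perron_family (ball 0 1) \<phi>" and "y + h \<in> ball 0 1" "z \<in> sphere 0 1"
  shows "w (y + h) - ereal ((2 * L + 1) * norm h) \<le> ereal (\<phi> z + L * dist y z)"
proof -
  have "dist (y + h) z \<le> dist y z + norm h"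
    using norm_triangle_ineq[of "y - z" h] by (simp add: dist_norm algebra_simps)
  then have "L * dist (y + h) z \<le> L * dist y z + L * norm h"
    using nonneg mult_left_mono by (fastforce simp: distrib_left)
  also have "L * norm h \<le> (2 * L + 1) * norm h"
    using nonneg by (intro mult_right_mono) auto
  finally have "ereal (\<phi> z + L * dist (y + h) z) \<le> ereal (\<phi> z + L * dist y z + (2 * L + 1) * norm h)"
    by simp
  with perron_family_le_cone[OF w assms(2,3)]
  have "w (y + h) \<le> ereal (\<phi> z + L * dist y z + (2 * L + 1) * norm h)"
    by (rule order_trans)
  then show ?thesis
    by (simp add: ereal_minus_le)
qed

lemma perron_family_translate:
  assumes w: "w \<in> perron_family (ball 0 1) \<phi>"
  shows "(\<lambda>y. if y \<in> (\<lambda>x. x + h) -` ball 0 1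
      then max (ereal (envelope y)) (w (y + h) - ereal ((2 * L + 1) * norm h))
      else ereal (envelope y)) \<in> perron_family (ball 0 1) \<phi>" (is "?W \<in> _")
  unfolding perron_family_def
proof (intro CollectI conjI ballI)
  have "OPSH (ball 0 1) w"
    using w by (simp add: perron_family_def)
  show "OPSH (ball 0 1) ?W"
  proof (rule OPSH_glue)
    show "OPSH (ball 0 1) (\<lambda>y. ereal (envelope y))"
      using envelope_in_perron_family by (simp add: perron_family_def)
    show "OPSH ((\<lambda>x. x + h) -` ball 0 1) (\<lambda>y. w (y + h) - ereal ((2 * L + 1) * norm h))"
      using OPSH_diff_const[OF OPSH_translate[OF \<open>OPSH (ball 0 1) w\<close>]] .
    show "open ((\<lambda>x. x + h) -` ball (0 :: oct \<times> oct) 1)"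
      by (intro open_vimage continuous_intros) simp
  qed (use translate_below_envelope_near_sphere[OF w] in simp)
  fix z :: "oct \<times> oct" assume "z \<in> frontier (ball 0 1)"
  then have "z \<in> sphere 0 1" by simp
  define R where "R y = max (envelope y) (\<phi> z + L * dist y z)" for y
  have "?W y \<le> ereal (R y)" for y
  proof -
    have "?W y \<le> max (ereal (envelope y)) (ereal (\<phi> z + L * dist y z))"
      using translate_le_cone[OF w _ \<open>z \<in> sphere 0 1\<close>, of y h] by (auto intro: max.coboundedI2)
    also have "\<dots> = ereal (R y)"
      by (simp add: R_def max_def)
    finally show ?thesis .
  qed
  then have "Limsup (at z within ball 0 1) ?W \<le> Limsup (at z within ball 0 1) (\<lambda>y. ereal (R y))"
    by (intro Limsup_mono) simp
  also have "\<dots> \<le> ereal (R z)"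
  proof (rule usc_on_Limsup_le)
    have "continuous_on UNIV envelope"
      using lipschitz_on_envelope by (rule lipschitz_on_continuous_on)
    then show "usc_on UNIV (\<lambda>y. ereal (R y))"
      unfolding R_def by (intro usc_on_continuous continuous_intros)
  qed simp_all
  also have "R z = \<phi> z"
    using envelope_eq[OF \<open>z \<in> sphere 0 1\<close>] by (simp add: R_def)
  finally show "Limsup (at z within ball 0 1) ?W \<le> ereal (\<phi> z)" .
qed

lemma envelope_le_perron_bremermann: "ereal (envelope x) \<le> perron_bremermann (ball 0 1) \<phi> x"
  unfolding perron_bremermann_eq_SUP
  using SUP_upper[OF envelope_in_perron_family, of "\<lambda>w. w x"] by simp

lemma perron_bremermann_le_cone:
  assumes "x \<in> ball 0 1" "\<zeta> \<in> sphere 0 1"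
  shows "perron_bremermann (ball 0 1) \<phi> x \<le> ereal (\<phi> \<zeta> + L * dist x \<zeta>)"
  unfolding perron_bremermann_eq_SUP using perron_family_le_cone[OF _ assms] by (rule SUP_least)

lemma perron_bremermann_translate:
  assumes "x \<in> ball 0 1" "x + h \<in> ball 0 1"
  shows "perron_bremermann (ball 0 1) \<phi> (x + h) \<le>
    perron_bremermann (ball 0 1) \<phi> x + ereal ((2 * L + 1) * norm h)"
proof -
  have "w (x + h) - ereal ((2 * L + 1) * norm h) \<le> perron_bremermann (ball 0 1) \<phi> x"
    if "w \<in> perron_family (ball 0 1) \<phi>" for w
    unfolding perron_bremermann_eq_SUP
    using SUP_upper[OF perron_family_translate[OF that, of h], of "\<lambda>w. w x"] assms(2)
    by (simp add: le_max_iff_disj)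
  then show ?thesis
    unfolding perron_bremermann_eq_SUP[of _ _ "x + h"] by (intro SUP_least) (simp add: ereal_minus_le)
qed

lemma perron_bremermann_lipschitz:
  obtains v where "\<And>x. x \<in> ball 0 1 \<Longrightarrow> perron_bremermann (ball 0 1) \<phi> x = ereal (v x)"
    "\<And>x. x \<in> sphere 0 1 \<Longrightarrow> v x = \<phi> x" "(2 * L + 1)-lipschitz_on (cball 0 1) v"
proof -
  define v where "v x = (if x \<in> ball 0 1 then real_of_ereal (perron_bremermann (ball 0 1) \<phi> x) else \<phi> x)"
    for x
  have PB: "perron_bremermann (ball 0 1) \<phi> x = ereal (v x)" if "x \<in> ball 0 1" for x
  proof -
    have "sphere (0 :: oct \<times> oct) 1 \<noteq> {}" by simp
    then obtain \<zeta> :: "oct \<times> oct" where "\<zeta> \<in> sphere 0 1" by blast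
    then have "ereal (envelope x) \<le> perron_bremermann (ball 0 1) \<phi> x"
      "perron_bremermann (ball 0 1) \<phi> x \<le> ereal (\<phi> \<zeta> + L * dist x \<zeta>)"
      using envelope_le_perron_bremermann perron_bremermann_le_cone[OF that] by blast+
    then have "\<bar>perron_bremermann (ball 0 1) \<phi> x\<bar> \<noteq> \<infinity>"
      by (cases "perron_bremermann (ball 0 1) \<phi> x") auto
    with that show ?thesis
      by (simp add: v_def ereal_real')
  qed
  have "(2 * L + 1)-lipschitz_on (ball 0 1 \<union> sphere 0 1) v"
  proof (rule lipschitz_on_barrier_glue)
    show "L-lipschitz_on (ball 0 1 \<union> sphere 0 1) envelope"
      using lipschitz_on_envelope by (rule lipschitz_on_subset) simp
    show "v x = envelope x" if "x \<in> sphere 0 1" for x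
      using that envelope_eq by (simp add: v_def)
    show "envelope x \<le> v x" if "x \<in> ball 0 1" for x
      using envelope_le_perron_bremermann[of x] PB[OF that] by simp
    show "v x \<le> v z + L * dist x z" if "x \<in> ball 0 1" "z \<in> sphere 0 1" for x z
      using perron_bremermann_le_cone[OF that] PB[OF that(1)] that(2) by (simp add: v_def)
    show "v y \<le> v x + (2 * L + 1) * dist x y" if "x \<in> ball 0 1" "y \<in> ball 0 1" for x y
      using perron_bremermann_translate[of x "y - x"] PB that by (simp add: dist_norm norm_minus_commute)
  qed (use nonneg in simp)
  moreover have "ball 0 1 \<union> sphere 0 1 = cball (0 :: oct \<times> oct) 1"
    using cball_diff_sphere[of 0 1] sphere_cball[of 0 1] by blast
  moreover have "v x = \<phi> x" if "x \<in> sphere 0 1" for x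
    using that by (simp add: v_def)
  ultimately show thesis
    using that PB by simp
qed

end

lemma C2_on_sphere_uminus:
  assumes "C2_on_sphere \<phi>"
  shows "C2_on_sphere (\<lambda>x. - \<phi> x)"
proof -
  obtain U \<Phi> where "open U" "sphere 0 1 \<subseteq> U" "C2_on U \<Phi>" "\<forall>z\<in>sphere 0 1. \<Phi> z = \<phi> z"
    using assms unfolding C2_on_sphere_def by blast
  then show ?thesis
    unfolding C2_on_sphere_def by (intro exI[of _ U] exI[of _ "\<lambda>x. - \<Phi> x"]) (simp add: C2_on_uminus)
qed

lemma C2_on_sphere_barriers:
  assumes "C2_on_sphere \<phi>"
  obtains L where "sphere_barriers \<phi> L"
proof -
  obtain L1 where "0 \<le> L1" and L1: "\<And>\<zeta>. \<zeta> \<in> sphere 0 1 \<Longrightarrow> \<exists>g\<in>affine_minorants L1 \<phi> (sphere 0 1). g \<zeta> = \<phi> \<zeta>"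
    using C2_on_sphere_touching_minorants[OF assms] by blast
  obtain L2 where L2: "\<And>\<zeta>. \<zeta> \<in> sphere 0 1 \<Longrightarrow>
      \<exists>g\<in>affine_minorants L2 (\<lambda>x. - \<phi> x) (sphere 0 1). g \<zeta> = - \<phi> \<zeta>"
    using C2_on_sphere_touching_minorants[OF C2_on_sphere_uminus[OF assms]] by blast
  have "sphere_barriers \<phi> (max L1 L2)"
  proof
    show "0 \<le> max L1 L2" using \<open>0 \<le> L1\<close> by simp
    show "\<exists>g\<in>affine_minorants (max L1 L2) \<phi> (sphere 0 1). g \<zeta> = \<phi> \<zeta>" if "\<zeta> \<in> sphere 0 1" for \<zeta>
      using L1[OF that] affine_minorants_mono[OF max.cobounded1] by blast
    show "\<exists>g\<in>affine_minorants (max L1 L2) (\<lambda>x. - \<phi> x) (sphere 0 1). g \<zeta> = - \<phi> \<zeta>"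
      if "\<zeta> \<in> sphere 0 1" for \<zeta>
      using L2[OF that] affine_minorants_mono[OF max.cobounded2] by blast
  qed
  then show thesis by (rule that)
qed

theorem proposition6p9:
  fixes \<phi> :: "oct \<times> oct \<Rightarrow> real" and u :: "oct \<times> oct \<Rightarrow> ereal"
  assumes "C2_on_sphere \<phi>"
    and "\<And>x. u x = (if x \<in> ball 0 1 then perron_bremermann (ball 0 1) \<phi> x else ereal (\<phi> x))"
  shows "\<exists>v L. (\<forall>x\<in>cball 0 1. u x = ereal (v x)) \<and> L-lipschitz_on (cball 0 1) v"
proof -
  obtain L where "sphere_barriers \<phi> L"
    using assms(1) by (rule C2_on_sphere_barriers)
  then obtain v where ball: "\<And>x. x \<in> ball 0 1 \<Longrightarrow> perron_bremermann (ball 0 1) \<phi> x = ereal (v x)"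
    and sphere: "\<And>x. x \<in> sphere 0 1 \<Longrightarrow> v x = \<phi> x" and "(2 * L + 1)-lipschitz_on (cball 0 1) v"
    by (elim sphere_barriers.perron_bremermann_lipschitz) (rule that)
  moreover have "u x = ereal (v x)" if "x \<in> cball 0 1" for x
  proof (cases "x \<in> ball 0 1")
    case False
    with that have "x \<in> sphere 0 1" by (simp add: le_less)
    with False show ?thesis using assms(2) sphere by simp
  qed (use assms(2) ball in simp)
  ultimately show ?thesis by blast
qed

end
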